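(* A finitely generated group has finitely many ends if and only if it has a Cayley graph admitting a Hamiltonian path.
   Context: A Cayley graph of $G$ means $\mathrm{Cay}(G;S)$ for a finite generating set $S$: vertex set $G$, with $g$ adjacent to $gs$ for $s\in S\cup S^{-1}$. A Hamiltonian path is a path (a map from an interval of $\mathbb{Z}$ to the vertex set, consecutive values adjacent) visiting every vertex exactly once. The number of ends of $G$ is the number of ends of any of its Cayley graphs, where the number of ends of a connected graph is the supremum over finite edge sets $A$ of the number of infinite components of the graph with $A$ removed (finite groups have $0$ ends). *)

theory Defs
  imports "HOL-Algebra.Generated_Groups"
begin

definition fin_gen_set :: "('a, 'b) monoid_scheme \<Rightarrow> 'a set \<Rightarrow> bool" where
  "fin_gen_set G S \<longleftrightarrow> finite S \<and> S \<subseteq> carrier G \<and> generate G S = carrier G"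

definition finitely_generated :: "('a, 'b) monoid_scheme \<Rightarrow> bool" where
  "finitely_generated G \<longleftrightarrow> (\<exists>S. fin_gen_set G S)"

definition cay_edges :: "('a, 'b) monoid_scheme \<Rightarrow> 'a set \<Rightarrow> 'a set set" where
  "cay_edges G S = {{g, h} | g h. g \<in> carrier G \<and> h \<in> carrier G \<and>
      (\<exists>s\<in>S. h = g \<otimes>\<^bsub>G\<^esub> s \<or> h = g \<otimes>\<^bsub>G\<^esub> inv\<^bsub>G\<^esub> s)}"

definition components :: "'a set \<Rightarrow> 'a set set \<Rightarrow> 'a set set" where
  "components V E = {{y. (\<lambda>u v. {u, v} \<in> E)\<^sup>*\<^sup>* x y} | x. x \<in> V}"

definition graph_finitely_many_ends :: "'a set \<Rightarrow> 'a set set \<Rightarrow> bool" where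
  "graph_finitely_many_ends V E \<longleftrightarrow> (\<exists>n::nat. \<forall>A. finite A \<longrightarrow>
     (let C = {X \<in> components V (E - A). infinite X} in finite C \<and> card C \<le> n))"

text \<open>The number of ends of a group is that of any of its Cayley graphs
  (independent of the finite generating set).\<close>
definition group_finitely_many_ends :: "('a, 'b) monoid_scheme \<Rightarrow> bool" where
  "group_finitely_many_ends G \<longleftrightarrow>
     (\<forall>S. fin_gen_set G S \<longrightarrow> graph_finitely_many_ends (carrier G) (cay_edges G S))"

definition int_interval :: "int set \<Rightarrow> bool" where
  "int_interval I \<longleftrightarrow> (\<forall>x y z. x \<in> I \<longrightarrow> z \<in> I \<longrightarrow> x \<le> y \<longrightarrow> y \<le> z \<longrightarrow> y \<in> I)"

definition cayley_ham_path :: "('a, 'b) monoid_scheme \<Rightarrow> 'a set \<Rightarrow> bool" where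
  "cayley_ham_path G S \<longleftrightarrow> (\<exists>I f. int_interval I \<and> bij_betw f I (carrier G) \<and>
     (\<forall>i. i \<in> I \<longrightarrow> i + 1 \<in> I \<longrightarrow> {f i, f (i + 1)} \<in> cay_edges G S))"

end

theory Submission
  imports Defs
begin

text \<open>If \<open>G\<close> has finitely many ends, Hopf's translation argument shows that it has at most two.
  A finite connected graph has a Hamiltonian path in its cube between any two vertices (Sekanina).
  Exhausting a one-ended graph by finite connected pieces whose complements stay connected and
  infinite therefore yields a Hamiltonian ray in the cube, and a two-ended graph splits into two
  one-ended halves joined by an edge, whose rays glue to a two-way infinite Hamiltonian path. The
  cube of \<open>Cay(G; S)\<close> lies in \<open>Cay(G; S')\<close>, where \<open>S'\<close> consists of the products of three
  elements of \<open>S \<union> S\<inverse> \<union> {1}\<close>.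

  Conversely, let \<open>f : I \<rightarrow> G\<close> be a Hamiltonian path of \<open>Cay(G; S\<^sub>0)\<close> and \<open>S\<close> any finite
  generating set. Consecutive vertices \<open>f i\<close>, \<open>f (i + 1)\<close> are joined in \<open>Cay(G; S)\<close> by a
  translate of one of finitely many fixed paths. Removing finitely many edges destroys only
  finitely many of these connections, so all \<open>f i\<close> with \<open>i \<gg> 0\<close>, and all with \<open>i \<ll> 0\<close>, stay in one
  component each, and there are at most two infinite components.\<close>

section \<open>Locally finite graphs\<close>

locale locally_finite_graph =
  fixes V :: "'a set" and adj :: "'a \<Rightarrow> 'a \<Rightarrow> bool"
  assumes adj_in_V: "adj a b \<Longrightarrow> a \<in> V \<and> b \<in> V"
    and adj_sym: "adj a b \<Longrightarrow> adj b a"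
    and finite_neighbours: "finite {b. adj a b}"
begin

text \<open>Note that
  \<open>a\<close> reaches itself even when \<open>a \<notin> W\<close>, so \<open>a \<in> component W a\<close> always.\<close>

definition reach :: "'a set \<Rightarrow> 'a \<Rightarrow> 'a \<Rightarrow> bool" where
  "reach W = (\<lambda>x y. adj x y \<and> x \<in> W \<and> y \<in> W)\<^sup>*\<^sup>*"

definition component :: "'a set \<Rightarrow> 'a \<Rightarrow> 'a set" where
  "component W a = {b. reach W a b}"

definition connected_set :: "'a set \<Rightarrow> bool" where
  "connected_set W \<longleftrightarrow> (\<forall>a\<in>W. \<forall>b\<in>W. reach W a b)"

definition one_ended :: "'a set \<Rightarrow> bool" where
  "one_ended W \<longleftrightarrow> (\<forall>F a b. finite F \<longrightarrow> a \<in> W - F \<longrightarrow> b \<in> W - F \<longrightarrow>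
     infinite (component (W - F) a) \<longrightarrow> infinite (component (W - F) b) \<longrightarrow>
     component (W - F) a = component (W - F) b)"

definition nbhd :: "'a set \<Rightarrow> 'a set" where
  "nbhd F = {x. \<exists>y\<in>F. adj y x}"

definition cube_adj :: "'a \<Rightarrow> 'a \<Rightarrow> bool" where
  "cube_adj a b \<longleftrightarrow> (\<exists>c d. (a = c \<or> adj a c) \<and> (c = d \<or> adj c d) \<and> (d = b \<or> adj d b))"

lemma finite_nbhd: "finite F \<Longrightarrow> finite (nbhd F)"
proof -
  assume "finite F"
  have "nbhd F = (\<Union>y\<in>F. {b. adj y b})" unfolding nbhd_def by auto
  then show ?thesis using \<open>finite F\<close> finite_neighbours by auto
qed

lemma cube_adj_sym: "cube_adj a b \<Longrightarrow> cube_adj b a"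
  unfolding cube_adj_def using adj_sym by blast

lemma adj_imp_cube_adj: "adj a b \<Longrightarrow> cube_adj a b"
  unfolding cube_adj_def by blast

lemma reach_refl [simp]: "reach W a a"
  unfolding reach_def by simp

lemma reach_step: "adj a b \<Longrightarrow> a \<in> W \<Longrightarrow> b \<in> W \<Longrightarrow> reach W a b"
  unfolding reach_def by (simp add: r_into_rtranclp)

lemma reach_trans: "reach W a b \<Longrightarrow> reach W b c \<Longrightarrow> reach W a c"
  unfolding reach_def by (rule rtranclp_trans)

lemma reach_sym: "reach W a b \<Longrightarrow> reach W b a"
  unfolding reach_def
proof (induction rule: rtranclp_induct)
  case (step y z)
  then show ?case by (metis (mono_tags, lifting) adj_sym converse_rtranclp_into_rtranclp)
qed simp

lemma reach_mono: "reach W a b \<Longrightarrow> W \<subseteq> W' \<Longrightarrow> reach W' a b"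
  unfolding reach_def
proof (induction rule: rtranclp_induct)
  case (step y z)
  then show ?case by (metis (mono_tags, lifting) rtranclp.simps subset_iff)
qed simp

lemma reach_target: "reach W a b \<Longrightarrow> b = a \<or> b \<in> W"
  unfolding reach_def by (induction rule: rtranclp_induct) auto

lemma reach_imp_adj_rtranclp: "reach W a b \<Longrightarrow> adj\<^sup>*\<^sup>* a b"
  unfolding reach_def by (induction rule: rtranclp_induct) (auto intro: rtranclp.rtrancl_into_rtrancl)

lemma reach_exit:
  assumes "reach W a b" "a \<in> C" "b \<notin> C"
  shows "\<exists>x y. x \<in> C \<and> y \<notin> C \<and> adj x y \<and> x \<in> W \<and> y \<in> W \<and> reach W a x"
  using assms unfolding reach_def
  by (induction rule: rtranclp_induct) blast+

lemma component_subset: "a \<in> W \<Longrightarrow> component W a \<subseteq> W"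
  unfolding component_def using reach_target by blast

lemma in_component [simp]: "a \<in> component W a"
  unfolding component_def by simp

lemma component_eq: "b \<in> component W a \<Longrightarrow> component W b = component W a"
  unfolding component_def using reach_sym reach_trans by blast

lemma components_disjoint: "component W a \<noteq> component W b \<Longrightarrow> component W a \<inter> component W b = {}"
  using component_eq by blast

lemma component_mono: "W \<subseteq> W' \<Longrightarrow> component W a \<subseteq> component W' a"
  unfolding component_def using reach_mono by blast

lemma reach_in_component: "reach W a b \<Longrightarrow> reach (component W a) a b"
  unfolding reach_def
proof (induction rule: rtranclp_induct)
  case (step y z)
  have "reach W a y" "reach W a z"
    using step(1) rtranclp.rtrancl_into_rtrancl[OF step(1,2)] unfolding reach_def .
  then have "y \<in> component W a" "z \<in> component W a" unfolding component_def by auto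
  then show ?case using step(2,3) rtranclp.rtrancl_into_rtrancl[OF step(3)] by blast
qed simp

lemma connected_component: "connected_set (component W a)"
  unfolding connected_set_def
proof (intro ballI)
  fix x y assume "x \<in> component W a" "y \<in> component W a"
  then have "component W x = component W a" "reach W x y"
    using component_eq unfolding component_def by (auto intro: reach_trans reach_sym)
  then show "reach (component W a) x y" using reach_in_component by metis
qed

lemma component_of_connected: "connected_set W \<Longrightarrow> a \<in> W \<Longrightarrow> component W a = W"
  using component_subset unfolding connected_set_def component_def by blast

lemma component_Diff_disjoint:
  assumes "a \<in> W" "component W a \<inter> D = {}"
  shows "component (W - D) a = component W a"
proof
  show "component (W - D) a \<subseteq> component W a" by (rule component_mono) auto
  show "component W a \<subseteq> component (W - D) a"
  proof
    fix b assume "b \<in> component W a"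
    then have "reach (component W a) a b" using reach_in_component unfolding component_def by blast
    moreover have "component W a \<subseteq> W - D" using assms component_subset by blast
    ultimately show "b \<in> component (W - D) a" unfolding component_def using reach_mono by blast
  qed
qed

lemma component_of_component_Diff:
  assumes "a \<in> component W a0 - F" "a0 \<in> W"
  shows "component (component W a0 - F) a = component (W - F) a"
proof
  show "component (component W a0 - F) a \<subseteq> component (W - F) a"
    using component_subset[OF assms(2)] by (intro component_mono) auto
next
  have a: "a \<in> W - F" "component W a = component W a0"
    using assms component_subset component_eq by blast+
  show "component (W - F) a \<subseteq> component (component W a0 - F) a"
  proof
    fix b assume "b \<in> component (W - F) a"
    then have "reach (component (W - F) a) a b" using reach_in_component unfolding component_def by blast
    moreover have "component (W - F) a \<subseteq> component W a0 - F"
      using component_subset[OF a(1)] component_mono[of "W - F" W a] a(2) by blast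
    ultimately show "b \<in> component (component W a0 - F) a"
      unfolding component_def using reach_mono by blast
  qed
qed

lemma connected_Un:
  assumes "connected_set A" "connected_set B" "A \<inter> B \<noteq> {}"
  shows "connected_set (A \<union> B)"
proof -
  obtain c where c: "c \<in> A" "c \<in> B" using assms by blast
  have "reach (A \<union> B) x c" if "x \<in> A \<union> B" for x
    using that assms c reach_mono[of _ x c "A \<union> B"] unfolding connected_set_def by blast
  then show ?thesis unfolding connected_set_def using reach_sym reach_trans by blast
qed

lemma connected_singleton: "connected_set {a}"
  unfolding connected_set_def by simp

lemma connected_edge: "adj x y \<Longrightarrow> connected_set {x, y}"
  unfolding connected_set_def using adj_sym reach_step by auto

lemma connected_Un_adj:
  assumes "connected_set A" "connected_set B" "x \<in> A" "y \<in> B" "adj x y"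
  shows "connected_set (A \<union> B)"
proof -
  have "connected_set (A \<union> {x, y})" using connected_Un[OF assms(1) connected_edge[OF assms(5)]] assms(3)
    by blast
  then have "connected_set ((A \<union> {x, y}) \<union> B)" using connected_Un[OF _ assms(2)] assms(4) by blast
  moreover have "(A \<union> {x, y}) \<union> B = A \<union> B" using assms(3,4) by blast
  ultimately show ?thesis by simp
qed

lemma connected_subset_component: "connected_set A \<Longrightarrow> A \<subseteq> W \<Longrightarrow> a \<in> A \<Longrightarrow> A \<subseteq> component W a"
  unfolding connected_set_def component_def using reach_mono by blast

lemma reach_imp_finite_connected:
  assumes "reach W a b" "a \<in> W"
  shows "\<exists>P. finite P \<and> P \<subseteq> W \<and> a \<in> P \<and> b \<in> P \<and> connected_set P"
  using assms(1) unfolding reach_def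
proof (induction rule: rtranclp_induct)
  case base then show ?case using assms(2) connected_singleton by (intro exI[of _ "{a}"]) auto
next
  case (step y z)
  then obtain P where P: "finite P" "P \<subseteq> W" "a \<in> P" "y \<in> P" "connected_set P" by blast
  have "connected_set {y, z}" using step(2) by (simp add: connected_edge)
  then have "connected_set (P \<union> {y, z})" using P connected_Un by blast
  then show ?case using P step(2) by (intro exI[of _ "P \<union> {y, z}"]) auto
qed

lemma finite_connected_superset:
  assumes "connected_set W" "y \<in> W" "finite T" "T \<subseteq> W"
  shows "\<exists>P. finite P \<and> P \<subseteq> W \<and> y \<in> P \<and> T \<subseteq> P \<and> connected_set P"
  using assms(3,4)
proof (induction rule: finite_induct)
  case empty then show ?case using assms(2) connected_singleton by (intro exI[of _ "{y}"]) auto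
next
  case (insert t T)
  then obtain P where P: "finite P" "P \<subseteq> W" "y \<in> P" "T \<subseteq> P" "connected_set P" by blast
  obtain Q where Q: "finite Q" "Q \<subseteq> W" "y \<in> Q" "t \<in> Q" "connected_set Q"
    using reach_imp_finite_connected[of W y t] assms insert unfolding connected_set_def by blast
  have "connected_set (P \<union> Q)" using P Q connected_Un by blast
  then show ?case using P Q by (intro exI[of _ "P \<union> Q"]) auto
qed

lemma component_adj_to_removed:
  assumes "connected_set W" "F \<subseteq> W" "f \<in> F" "b \<in> W - F"
  shows "\<exists>x y. x \<in> component (W - F) b \<and> y \<in> F \<and> adj x y"
proof -
  define C where "C = component (W - F) b"
  have CW: "C \<subseteq> W - F" unfolding C_def using component_subset[OF assms(4)] .
  have "reach W b f" using assms unfolding connected_set_def by blast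
  then obtain x y where xy: "x \<in> C" "y \<notin> C" "adj x y" "y \<in> W"
    using reach_exit[of W b f C] CW assms(3) unfolding C_def by auto
  have "y \<in> F"
  proof (rule ccontr)
    assume "y \<notin> F"
    then have "reach (W - F) x y" using xy CW by (intro reach_step) auto
    then have "y \<in> C" using xy(1) reach_trans unfolding C_def component_def by blast
    then show False using xy(2) by blast
  qed
  then show ?thesis using xy unfolding C_def by blast
qed

text \<open>Every other component of \<open>W - P\<close> hangs on the connected set \<open>P\<close>.\<close>

lemma connected_Diff_component:
  assumes cW: "connected_set W" and PW: "P \<subseteq> W" and cP: "connected_set P" and p0: "p0 \<in> P"
    and a: "a \<in> W - P"
  shows "connected_set (W - component (W - P) a)"
proof -
  define N where "N = W - component (W - P) a"
  have PN: "P \<subseteq> N" using component_subset[OF a] PW unfolding N_def by blast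
  have "reach N b p0" if b: "b \<in> N" for b
  proof (cases "b \<in> P")
    case True
    then show ?thesis using cP p0 PN reach_mono unfolding connected_set_def by blast
  next
    case False
    then have bWP: "b \<in> W - P" using b unfolding N_def by blast
    define D where "D = component (W - P) b"
    have "D \<noteq> component (W - P) a" using b unfolding D_def N_def by auto
    then have DN: "D \<subseteq> N"
      using components_disjoint component_subset[OF bWP] unfolding D_def N_def by blast
    obtain x y where xy: "x \<in> D" "y \<in> P" "adj x y"
      using component_adj_to_removed[OF cW PW p0 bWP] unfolding D_def by blast
    have "reach N b x"
      using xy(1) DN reach_in_component reach_mono unfolding D_def component_def by blast
    moreover have "reach N x y" using xy DN PN by (intro reach_step) auto
    moreover have "reach N y p0" using cP xy(2) p0 PN reach_mono unfolding connected_set_def by blast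
    ultimately show ?thesis using reach_trans by blast
  qed
  then show ?thesis unfolding N_def connected_set_def using reach_sym reach_trans by blast
qed

lemma finitely_many_components:
  assumes "connected_set K" "finite F"
  shows "finite {component (K - F) a | a. a \<in> K - F}"
proof (cases "K \<inter> F = {}")
  case True
  then have "{component (K - F) a | a. a \<in> K - F} \<subseteq> {K}"
    using component_of_connected[OF assms(1)] by (auto simp: Diff_triv)
  then show ?thesis using finite_subset by blast
next
  case False
  then obtain f where f: "f \<in> K \<inter> F" by blast
  have "{component (K - F) a | a. a \<in> K - F} \<subseteq> component (K - F) ` nbhd F"
  proof
    fix C assume "C \<in> {component (K - F) a | a. a \<in> K - F}"
    then obtain a where a: "a \<in> K - F" "C = component (K - F) a" by blast
    have "K - K \<inter> F = K - F" by blast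
    then obtain x y where "x \<in> C" "y \<in> K \<inter> F" "adj x y"
      using component_adj_to_removed[OF assms(1), of "K \<inter> F" f a] a f by auto
    then show "C \<in> component (K - F) ` nbhd F"
      using a component_eq adj_sym unfolding nbhd_def by blast
  qed
  then show ?thesis using finite_nbhd[OF assms(2)] finite_subset by blast
qed

lemma infinite_component_exists:
  assumes "connected_set K" "infinite K" "finite F"
  shows "\<exists>a\<in>K - F. infinite (component (K - F) a)"
proof (rule ccontr)
  assume "\<not> ?thesis"
  then have "\<forall>C\<in>{component (K - F) a | a. a \<in> K - F}. finite C" by blast
  moreover have "K - F \<subseteq> \<Union>{component (K - F) a | a. a \<in> K - F}" using in_component by blast
  ultimately have "finite (K - F)"
    using finitely_many_components[OF assms(1,3)] by (meson finite_Union finite_subset)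
  then show False using assms by simp
qed

lemma finite_vertices_in_finite_components:
  assumes "connected_set W" "finite F"
  shows "finite {x \<in> W - F. finite (component (W - F) x)}"
proof -
  have "{x \<in> W - F. finite (component (W - F) x)}
      \<subseteq> \<Union>{D \<in> {component (W - F) a | a. a \<in> W - F}. finite D}"
    using in_component by blast
  moreover have "finite (\<Union>{D \<in> {component (W - F) a | a. a \<in> W - F}. finite D})"
    using finitely_many_components[OF assms] by (intro finite_Union) auto
  ultimately show ?thesis by (rule finite_subset)
qed

lemma neighbour_in_connected:
  assumes "connected_set F" "u \<in> F" "F \<noteq> {u}"
  shows "\<exists>u'\<in>F. u' \<noteq> u \<and> adj u u'"
proof -
  obtain a where a: "a \<in> F" "a \<noteq> u" using assms by blast
  have "reach F u a" using assms a unfolding connected_set_def by blast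
  then show ?thesis using reach_exit[of F u a "{u}"] a by auto
qed

end

section \<open>Hamiltonian paths in the cube\<close>

context locally_finite_graph
begin

definition cube_ham_path :: "'a set \<Rightarrow> 'a list \<Rightarrow> bool" where
  "cube_ham_path F xs \<longleftrightarrow> distinct xs \<and> set xs = F \<and> successively cube_adj xs"

lemma cube_ham_path_rev: "cube_ham_path F xs \<Longrightarrow> cube_ham_path F (rev xs)"
  unfolding cube_ham_path_def by (auto intro: successively_mono cube_adj_sym)

lemma cube_ham_path_append:
  assumes "cube_ham_path F1 xs" "cube_ham_path F2 ys" "F1 \<inter> F2 = {}"
    and "xs \<noteq> []" "ys \<noteq> []" "cube_adj (last xs) (hd ys)"
  shows "cube_ham_path (F1 \<union> F2) (xs @ ys)"
  using assms unfolding cube_ham_path_def by (simp add: successively_append_iff)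

text \<open>The hypothesis \<open>ham\<close> makes this usable inside the induction proving it.\<close>

lemma cube_ham_path_ending_near:
  assumes "connected_set F" "u \<in> F" "z \<in> F"
    and ham: "\<And>v. v \<in> F \<Longrightarrow> v \<noteq> u \<Longrightarrow> \<exists>xs. cube_ham_path F xs \<and> hd xs = u \<and> last xs = v"
  shows "\<exists>xs. cube_ham_path F xs \<and> hd xs = u \<and> (last xs = z \<or> adj z (last xs))"
proof (cases "z = u \<and> F = {u}")
  case True
  then show ?thesis unfolding cube_ham_path_def by (intro exI[of _ "[u]"]) auto
next
  case False
  then consider "z \<noteq> u" | "z = u" "F \<noteq> {u}" by blast
  then show ?thesis
  proof cases
    case 1
    then show ?thesis using ham assms(3) by blast
  next
    case 2
    then obtain u' where "u' \<in> F" "u' \<noteq> u" "adj u u'" using neighbour_in_connected assms by blast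
    then show ?thesis using ham 2 by blast
  qed
qed

text \<open>Sekanina's argument: split \<open>F\<close> into the component \<open>F\<^sub>2\<close> of \<open>v\<close> in \<open>F - {u}\<close> and the
  connected rest \<open>F\<^sub>1 \<ni> u\<close>; recursively traverse \<open>F\<^sub>1\<close> from \<open>u\<close> ending next to \<open>u\<close>, then \<open>F\<^sub>2\<close>
  starting next to a neighbour \<open>w \<in> F\<^sub>2\<close> of \<open>u\<close>.\<close>

lemma finite_connected_cube_ham_path:
  assumes "finite F" "connected_set F" "u \<in> F" "v \<in> F" "u \<noteq> v"
  shows "\<exists>xs. cube_ham_path F xs \<and> hd xs = u \<and> last xs = v"
  using assms
proof (induction "card F" arbitrary: F u v rule: less_induct)
  case less
  define F2 where "F2 = component (F - {u}) v"
  define F1 where "F1 = F - F2"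
  have vFu: "v \<in> F - {u}" using less.prems(4,5) by blast
  have F2sub: "F2 \<subseteq> F - {u}" unfolding F2_def using component_subset[OF vFu] .
  have vF2: "v \<in> F2" unfolding F2_def by simp
  have uF1: "u \<in> F1" using F2sub less.prems(3) unfolding F1_def by blast
  have fin: "finite F1" "finite F2" using less.prems(1) F2sub unfolding F1_def by (auto intro: finite_subset)
  have card: "card F1 < card F" "card F2 < card F"
    using vF2 less.prems(1,3,4) F2sub unfolding F1_def by (auto intro!: psubset_card_mono)
  have cF1: "connected_set F1"
    unfolding F1_def F2_def using less.prems(2,3) vFu
    by (intro connected_Diff_component) (auto simp: connected_singleton)
  have cF2: "connected_set F2" unfolding F2_def by (rule connected_component)
  obtain w where w: "w \<in> F2" "adj w u"
    using component_adj_to_removed[OF less.prems(2), of "{u}" u v] less.prems(3) vFu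
    unfolding F2_def by blast
  obtain xs where xs: "cube_ham_path F1 xs" "hd xs = u" "last xs = u \<or> adj u (last xs)"
    using cube_ham_path_ending_near[OF cF1 uF1 uF1] less.hyps[OF card(1) fin(1) cF1 uF1] by blast
  obtain ys where ys: "cube_ham_path F2 ys" "hd ys = v" "last ys = w \<or> adj w (last ys)"
    using cube_ham_path_ending_near[OF cF2 vF2 w(1)] less.hyps[OF card(2) fin(2) cF2 vF2] by blast
  have ne: "xs \<noteq> []" "ys \<noteq> []" using xs(1) ys(1) uF1 vF2 unfolding cube_ham_path_def by auto
  have "cube_adj (last xs) (hd (rev ys))"
    using xs(3) ys(3) w(2) adj_sym ne unfolding cube_adj_def by (auto simp: hd_rev)
  moreover have "F1 \<inter> F2 = {}" "F1 \<union> F2 = F" using F2sub unfolding F1_def by auto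
  ultimately have "cube_ham_path F (xs @ rev ys)"
    using cube_ham_path_append[OF xs(1) cube_ham_path_rev[OF ys(1)]] ne by auto
  then show ?case using xs(2) ys(2) ne by (auto simp: last_rev)
qed

lemma finite_connected_cube_ham_path_ending_near:
  assumes "finite F" "connected_set F" "u \<in> F" "z \<in> F"
  shows "\<exists>xs. cube_ham_path F xs \<and> hd xs = u \<and> (last xs = z \<or> adj z (last xs))"
  using cube_ham_path_ending_near[OF assms(2-4)] finite_connected_cube_ham_path[OF assms(1,2,3)]
  by blast

end

section \<open>Hamiltonian rays in one-ended graphs\<close>

lemma prefix_chain_nth:
  assumes ext: "\<And>n. \<exists>q. P (Suc n) = P n @ q"
    and i: "i < length (P n)" "i < length (P m)"
  shows "P m ! i = P n ! i"
proof -
  have grow: "\<exists>q. P k = P j @ q" if "j \<le> k" for j k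
    using that
  proof (induction k rule: dec_induct)
    case (step k)
    then show ?case using ext[of k] by (metis append.assoc)
  qed simp
  show ?thesis
  proof (cases "n \<le> m")
    case True
    then obtain q where "P m = P n @ q" using grow by blast
    then show ?thesis using i(1) by (simp add: nth_append)
  next
    case False
    then obtain q where "P n = P m @ q" using grow by fastforce
    then show ?thesis using i(2) by (simp add: nth_append)
  qed
qed

lemma limit_of_prefix_chain:
  fixes P :: "nat \<Rightarrow> 'a list"
  assumes ext: "\<And>n. \<exists>q. P (Suc n) = P n @ q" and len: "\<And>n. n \<le> length (P n)"
    and dist: "\<And>n. distinct (P n)" and sub: "\<And>n. set (P n) \<subseteq> W"
    and cov: "\<And>w. w \<in> W \<Longrightarrow> \<exists>n. w \<in> set (P n)"
    and succ: "\<And>n. successively R (P n)"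
  defines "r \<equiv> \<lambda>i. P (Suc i) ! i"
  shows "bij_betw r UNIV W" "r 0 = hd (P 1)" "R (r i) (r (Suc i))"
proof -
  have r_nth: "r i = P n ! i" if "i < length (P n)" for i n
    unfolding r_def using prefix_chain_nth[OF ext that] len[of "Suc i"] by simp
  have "inj r"
  proof (rule injI)
    fix i j assume "r i = r j"
    moreover have "i < length (P (Suc (max i j)))" "j < length (P (Suc (max i j)))"
      using len[of "Suc (max i j)"] by auto
    ultimately show "i = j" using r_nth dist nth_eq_iff_index_eq by metis
  qed
  moreover have "range r = W"
  proof
    show "range r \<subseteq> W"
    proof
      fix w assume "w \<in> range r"
      then obtain i where "w = P (Suc i) ! i" unfolding r_def by blast
      moreover have "i < length (P (Suc i))" using len[of "Suc i"] by simp
      ultimately show "w \<in> W" using sub by (meson nth_mem subsetD)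
    qed
    show "W \<subseteq> range r"
    proof
      fix w assume "w \<in> W"
      then obtain n i where "i < length (P n)" "P n ! i = w" using cov by (meson in_set_conv_nth)
      then show "w \<in> range r" using r_nth by (metis rangeI)
    qed
  qed
  ultimately show "bij_betw r UNIV W" unfolding bij_betw_def by blast
  show "r 0 = hd (P 1)" using len[of 1] unfolding r_def by (cases "P 1") auto
  have "Suc i < length (P (Suc (Suc i)))" using len[of "Suc (Suc i)"] by simp
  then show "R (r i) (r (Suc i))"
    using r_nth successively_nth[OF succ] by (metis Suc_lessD)
qed

context locally_finite_graph
begin

primrec ball :: "'a \<Rightarrow> nat \<Rightarrow> 'a set" where
  "ball y 0 = {y}"
| "ball y (Suc n) = ball y n \<union> nbhd (ball y n)"

lemma finite_ball: "finite (ball y n)"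
  by (induction n) (auto intro: finite_nbhd)

lemma ball_exhausts: "adj\<^sup>*\<^sup>* y b \<Longrightarrow> \<exists>n. b \<in> ball y n"
proof (induction rule: rtranclp_induct)
  case base then show ?case by (metis ball.simps(1) singletonI)
next
  case (step b c)
  then obtain n where "b \<in> ball y n" by blast
  then have "c \<in> nbhd (ball y n)" using step(2) unfolding nbhd_def by blast
  then have "c \<in> ball y (Suc n)" by simp
  then show ?case by blast
qed

lemma one_ended_Diff: "one_ended W \<Longrightarrow> finite U \<Longrightarrow> one_ended (W - U)"
  unfolding one_ended_def
proof (intro allI impI)
  fix F a b
  assume "\<forall>F a b. finite F \<longrightarrow> a \<in> W - F \<longrightarrow> b \<in> W - F \<longrightarrow> infinite (component (W - F) a) \<longrightarrow>
      infinite (component (W - F) b) \<longrightarrow> component (W - F) a = component (W - F) b"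
    and "finite U" "finite F" "a \<in> W - U - F" "b \<in> W - U - F"
    "infinite (component (W - U - F) a)" "infinite (component (W - U - F) b)"
  moreover have "W - U - F = W - (U \<union> F)" by blast
  ultimately show "component (W - U - F) a = component (W - U - F) b" by (metis finite_UnI)
qed

lemma one_ended_finite_connected_core:
  assumes cW: "connected_set W" and iW: "infinite W" and oe: "one_ended W"
    and y: "y \<in> W" and fT: "finite T"
  shows "\<exists>F. finite F \<and> F \<subseteq> W \<and> y \<in> F \<and> T \<inter> W \<subseteq> F \<and> connected_set F
    \<and> connected_set (W - F) \<and> infinite (W - F)"
proof -
  obtain F0 where F0: "finite F0" "F0 \<subseteq> W" "y \<in> F0" "T \<inter> W \<subseteq> F0" "connected_set F0"
    using finite_connected_superset[OF cW y, of "T \<inter> W"] fT by blast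
  obtain a where a: "a \<in> W - F0" "infinite (component (W - F0) a)"
    using infinite_component_exists[OF cW iW F0(1)] by blast
  define C where "C = component (W - F0) a"
  have CW: "C \<subseteq> W - F0" unfolding C_def using component_subset[OF a(1)] .
  have "W - C - F0 \<subseteq> {x \<in> W - F0. finite (component (W - F0) x)}"
  proof
    fix x assume x: "x \<in> W - C - F0"
    then have "component (W - F0) x \<noteq> C" using in_component[of x "W - F0"] by blast
    then show "x \<in> {x \<in> W - F0. finite (component (W - F0) x)}"
      using oe F0(1) x a unfolding one_ended_def C_def by blast
  qed
  then have "finite (W - C)"
    using finite_vertices_in_finite_components[OF cW F0(1)] F0(1) by (meson finite_Diff2 finite_subset)
  moreover have "connected_set (W - C)"
    unfolding C_def using connected_Diff_component[OF cW F0(2) F0(5) F0(3) a(1)] .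
  moreover have "W - (W - C) = C" using CW by blast
  moreover have "connected_set C" unfolding C_def by (rule connected_component)
  ultimately show ?thesis using F0 CW a(2) unfolding C_def[symmetric] by (intro exI[of _ "W - C"]) auto
qed

lemma one_ended_ray_segment:
  assumes cW: "connected_set W" and iW: "infinite W" and oe: "one_ended W"
    and y: "y \<in> W" and fT: "finite T"
  shows "\<exists>xs y'. xs \<noteq> [] \<and> cube_ham_path (set xs) xs \<and> set xs \<subseteq> W \<and> T \<inter> W \<subseteq> set xs \<and> hd xs = y
    \<and> cube_adj (last xs) y' \<and> y' \<in> W - set xs
    \<and> connected_set (W - set xs) \<and> infinite (W - set xs)"
proof -
  obtain F where F: "finite F" "F \<subseteq> W" "y \<in> F" "T \<inter> W \<subseteq> F" "connected_set F"
    "connected_set (W - F)" "infinite (W - F)"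
    using one_ended_finite_connected_core[OF assms] by blast
  obtain a where "a \<in> W - F" using F(7) by (metis finite.emptyI ex_in_conv)
  then have "reach W y a" using cW y unfolding connected_set_def by blast
  then obtain z y' where zy: "z \<in> F" "y' \<notin> F" "adj z y'" "y' \<in> W"
    using reach_exit[of W y a F] F(3) \<open>a \<in> W - F\<close> by blast
  obtain xs where xs: "cube_ham_path F xs" "hd xs = y" "last xs = z \<or> adj z (last xs)"
    using finite_connected_cube_ham_path_ending_near[OF F(1,5,3) zy(1)] by blast
  have "cube_adj (last xs) y'" using xs(3) zy(3) adj_sym unfolding cube_adj_def by blast
  moreover have "xs \<noteq> []" using xs(1) F(3) unfolding cube_ham_path_def by auto
  ultimately show ?thesis using xs F zy unfolding cube_ham_path_def by (intro exI[of _ xs] exI[of _ y']) auto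
qed

text \<open>Stage \<open>n\<close> of the construction of a Hamiltonian ray of the cube: a path \<open>p\<close> from \<open>y\<close>,
  continued by a vertex \<open>z\<close> not on it, which covers the first \<open>n\<close> balls around \<open>y\<close> and leaves an
  infinite connected remainder.\<close>

definition ray_stage :: "'a set \<Rightarrow> 'a \<Rightarrow> nat \<Rightarrow> 'a list \<times> 'a \<Rightarrow> bool" where
  "ray_stage W y n = (\<lambda>(p, z). distinct p \<and> set p \<subseteq> W \<and> z \<in> W - set p
     \<and> connected_set (W - set p) \<and> infinite (W - set p) \<and> successively cube_adj (p @ [z])
     \<and> hd (p @ [z]) = y \<and> (\<forall>k<n. ball y k \<inter> W \<subseteq> set p) \<and> n \<le> length p)"

lemma ray_stage_extend:
  assumes oe: "one_ended W" and st: "ray_stage W y n (p, z)"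
  shows "\<exists>q z'. ray_stage W y (Suc n) (p @ q, z')"
proof -
  have I: "distinct p" "set p \<subseteq> W" "z \<in> W - set p" "connected_set (W - set p)"
    "infinite (W - set p)" "successively cube_adj (p @ [z])" "hd (p @ [z]) = y"
    "\<forall>k<n. ball y k \<inter> W \<subseteq> set p" "n \<le> length p" using st unfolding ray_stage_def by auto
  obtain xs z' where X: "xs \<noteq> []" "cube_ham_path (set xs) xs" "set xs \<subseteq> W - set p"
    "ball y n \<inter> (W - set p) \<subseteq> set xs" "hd xs = z" "cube_adj (last xs) z'"
    "z' \<in> W - set p - set xs" "connected_set (W - set p - set xs)" "infinite (W - set p - set xs)"
    using one_ended_ray_segment[OF I(4,5) one_ended_Diff[OF oe] I(3) finite_ball] by blast
  have "successively cube_adj p" "p = [] \<or> cube_adj (last p) z"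
    using I(6) by (simp_all add: successively_append_iff)
  moreover have "successively cube_adj (xs @ [z'])"
    using X(1,2,6) unfolding cube_ham_path_def by (simp add: successively_append_iff)
  ultimately have "successively cube_adj (p @ xs @ [z'])"
    using X(1,5) by (subst successively_append_iff) auto
  moreover have "hd (p @ xs @ [z']) = y" using I(7) X(1,5) by (cases p) auto
  moreover have "\<forall>k<Suc n. ball y k \<inter> W \<subseteq> set (p @ xs)"
    using I(8) X(4) by (auto simp: less_Suc_eq)
  moreover have "W - set (p @ xs) = W - set p - set xs" by auto
  moreover have "distinct (p @ xs)" "set (p @ xs) \<subseteq> W" "Suc n \<le> length (p @ xs)"
    using I(1,2,9) X(1,2,3) unfolding cube_ham_path_def by (auto simp: Suc_le_eq neq_Nil_conv)
  ultimately have "ray_stage W y (Suc n) (p @ xs, z')"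
    using X(7-9) unfolding ray_stage_def by simp
  then show ?thesis by blast
qed

lemma one_ended_ray:
  assumes cW: "connected_set W" and iW: "infinite W" and oe: "one_ended W" and y: "y \<in> W"
  shows "\<exists>r. bij_betw r UNIV W \<and> r 0 = y \<and> (\<forall>i. cube_adj (r i) (r (Suc i)))"
proof -
  have "\<exists>st. \<forall>n. ray_stage W y n (st n) \<and> (\<exists>q. fst (st (Suc n)) = fst (st n) @ q)"
  proof (rule dependent_nat_choice)
    show "\<exists>s. ray_stage W y 0 s" using y cW iW unfolding ray_stage_def by (intro exI[of _ "([], y)"]) auto
  next
    fix s n assume "ray_stage W y n s"
    then obtain q z' where "ray_stage W y (Suc n) (fst s @ q, z')"
      using ray_stage_extend[OF oe, of y n "fst s" "snd s"] by auto
    then show "\<exists>s'. ray_stage W y (Suc n) s' \<and> (\<exists>q. fst s' = fst s @ q)" by fastforce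
  qed
  then obtain st where st: "\<And>n. ray_stage W y n (st n)" "\<And>n. \<exists>q. fst (st (Suc n)) = fst (st n) @ q"
    by blast
  define P where "P n = fst (st n)" for n
  have P: "distinct (P n)" "set (P n) \<subseteq> W" "successively cube_adj (P n @ [snd (st n)])"
    "hd (P n @ [snd (st n)]) = y" "\<forall>k<n. ball y k \<inter> W \<subseteq> set (P n)" "n \<le> length (P n)" for n
    using st(1)[of n] unfolding ray_stage_def P_def by (auto split: prod.splits)
  have cov: "\<exists>n. w \<in> set (P n)" if "w \<in> W" for w
  proof -
    have "reach W y w" using cW y that unfolding connected_set_def by blast
    then obtain k where "w \<in> ball y k" using ball_exhausts reach_imp_adj_rtranclp by blast
    then show ?thesis using P(5)[of "Suc k"] that by blast
  qed
  have succ: "successively cube_adj (P n)" for n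
    using P(3)[of n] by (simp add: successively_append_iff)
  have "hd (P 1) = y" using P(4)[of 1] P(6)[of 1] by (cases "P 1") auto
  then show ?thesis
    using limit_of_prefix_chain[where R = cube_adj, OF st(2)[folded P_def] P(6) P(1) P(2) cov succ]
    by (intro exI[of _ "\<lambda>i. P (Suc i) ! i"]) auto
qed

end

section \<open>Infinite components\<close>

lemma three_le_card: "finite A \<Longrightarrow> {x, y, z} \<subseteq> A \<Longrightarrow> x \<noteq> y \<Longrightarrow> x \<noteq> z \<Longrightarrow> y \<noteq> z \<Longrightarrow> 3 \<le> card A"
  using card_mono[of A "{x, y, z}"] by simp

context locally_finite_graph
begin

definition infinite_components :: "'a set \<Rightarrow> 'a set set" where
  "infinite_components F =
     {component (V - F) a | a. a \<in> V - F \<and> infinite (component (V - F) a)}"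

lemma infinite_componentsI:
  "a \<in> V - F \<Longrightarrow> infinite (component (V - F) a) \<Longrightarrow> component (V - F) a \<in> infinite_components F"
  unfolding infinite_components_def by blast

lemma infinite_components_subset: "X \<in> infinite_components F \<Longrightarrow> X \<subseteq> V - F"
  unfolding infinite_components_def using component_subset by blast

lemma infinite_components_disjoint:
  "X \<in> infinite_components F \<Longrightarrow> Y \<in> infinite_components F \<Longrightarrow> X \<noteq> Y \<Longrightarrow> X \<inter> Y = {}"
  unfolding infinite_components_def using components_disjoint by blast

lemma infinite_component_Un:
  assumes "X \<in> infinite_components P" "X \<inter> Q = {}"
  shows "X \<in> infinite_components (P \<union> Q)"
proof -
  obtain a where a: "a \<in> V - P" "X = component (V - P) a" "infinite X"
    using assms(1) unfolding infinite_components_def by blast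
  have "component (V - P - Q) a = X" using component_Diff_disjoint[OF a(1)] a(2) assms(2) by simp
  moreover have "V - P - Q = V - (P \<union> Q)" by blast
  moreover have "a \<in> V - (P \<union> Q)" using a assms(2) in_component[of a "V - P"] by blast
  ultimately have "component (V - (P \<union> Q)) a = X" "a \<in> V - (P \<union> Q)" by auto
  then show ?thesis using infinite_componentsI[of a "P \<union> Q"] a(3) by simp
qed

text \<open>A component of \<open>V - T\<close> that misses \<open>P\<close> is attached to \<open>T\<close> by an edge, so together with
  the connected set \<open>T\<close> it stays inside one component of \<open>V - P\<close>.\<close>

lemma component_avoiding_in_component:
  assumes cV: "connected_set V" and T: "T \<subseteq> V" "connected_set T" "t \<in> T" "T \<inter> P = {}"
    and a: "a \<in> V - T" and XP: "component (V - T) a \<inter> P = {}"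
  shows "component (V - T) a \<subseteq> component (V - P) t"
proof -
  define X where "X = component (V - T) a"
  obtain x y where xy: "x \<in> X" "y \<in> T" "adj x y"
    using component_adj_to_removed[OF cV T(1,3) a] unfolding X_def by blast
  have "connected_set X" unfolding X_def by (rule connected_component)
  then have "connected_set (X \<union> T)" using connected_Un_adj[OF _ T(2) xy] by blast
  moreover have "X \<union> T \<subseteq> V - P" using component_subset[OF a] XP T(1,4) unfolding X_def by blast
  moreover have "t \<in> X \<union> T" using T(3) by blast
  ultimately have "X \<union> T \<subseteq> component (V - P) t" by (rule connected_subset_component)
  then show ?thesis unfolding X_def by blast
qed

lemma card_infinite_components_mono:
  assumes cV: "connected_set V" and fF': "finite F'" and sub: "F \<subseteq> F'"
    and fin: "finite (infinite_components F')"
  shows "card (infinite_components F) \<le> card (infinite_components F')"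
proof -
  have "\<exists>Y \<in> infinite_components F'. Y \<subseteq> X" if X: "X \<in> infinite_components F" for X
  proof -
    obtain a0 where a0: "a0 \<in> V - F" "X = component (V - F) a0" "infinite X"
      using X unfolding infinite_components_def by blast
    obtain a where a: "a \<in> X - F'" "infinite (component (X - F') a)"
      using infinite_component_exists[OF connected_component[of "V - F" a0], of F'] a0 fF' by blast
    have "component (X - F') a = component (V - F - F') a"
      unfolding a0(2) by (rule component_of_component_Diff) (use a a0 in auto)
    moreover have "V - F - F' = V - F'" using sub by blast
    moreover have "a \<in> V - F'" using a(1) component_subset[OF a0(1)] a0(2) by blast
    ultimately have "component (V - F') a \<in> infinite_components F'" "component (V - F') a \<subseteq> X"
      using a component_subset[of a "X - F'"] infinite_componentsI[of a F'] by auto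
    then show ?thesis by blast
  qed
  then obtain \<phi> where \<phi>: "\<forall>X\<in>infinite_components F. \<phi> X \<in> infinite_components F' \<and> \<phi> X \<subseteq> X"
    using bchoice[of "infinite_components F" "\<lambda>X Y. Y \<in> infinite_components F' \<and> Y \<subseteq> X"] by blast
  have inj: "inj_on \<phi> (infinite_components F)"
  proof (rule inj_onI)
    fix X Y assume XY: "X \<in> infinite_components F" "Y \<in> infinite_components F" "\<phi> X = \<phi> Y"
    then have "\<phi> X \<in> infinite_components F'" "\<phi> X \<subseteq> X \<inter> Y" using \<phi> by auto
    moreover have "Z \<noteq> {}" if "Z \<in> infinite_components F'" for Z
      using that unfolding infinite_components_def by auto
    ultimately show "X = Y" using infinite_components_disjoint[OF XY(1,2)] by blast
  qed
  have "\<phi> ` infinite_components F \<subseteq> infinite_components F'" using \<phi> by blast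
  then show ?thesis using card_inj_on_le[OF inj _ fin] by blast
qed

lemma one_ended_if_at_most_one_end:
  assumes "\<And>F. finite F \<Longrightarrow> finite (infinite_components F) \<and> card (infinite_components F) \<le> 1"
  shows "one_ended V"
  unfolding one_ended_def
proof (intro allI impI)
  fix F a b assume F: "finite F" and "a \<in> V - F" "b \<in> V - F"
    "infinite (component (V - F) a)" "infinite (component (V - F) b)"
  then have "component (V - F) a \<in> infinite_components F" "component (V - F) b \<in> infinite_components F"
    using infinite_componentsI by auto
  then show "component (V - F) a = component (V - F) b"
    using assms[OF F] card_le_Suc0_iff_eq[of "infinite_components F"] by auto
qed

text \<open>Two infinite components of \<open>K - F\<close> and one of \<open>L - F\<close> would be three infinite components
  of \<open>V - (P \<union> F)\<close>.\<close>

lemma one_ended_infinite_component: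
  assumes bd: "\<And>F. finite F \<Longrightarrow> finite (infinite_components F) \<and> card (infinite_components F) \<le> 2"
    and fP: "finite P" and K: "K \<in> infinite_components P" and L: "L \<in> infinite_components P"
    and KL: "K \<noteq> L"
  shows "one_ended K"
  unfolding one_ended_def
proof (intro allI impI)
  fix F a b assume F: "finite F" and ab: "a \<in> K - F" "b \<in> K - F"
    and inf: "infinite (component (K - F) a)" "infinite (component (K - F) b)"
  obtain k l where k: "k \<in> V - P" "K = component (V - P) k" "infinite K"
    and l: "l \<in> V - P" "L = component (V - P) l" "infinite L"
    using K L unfolding infinite_components_def by blast
  have restrict: "component (X - F) x = component (V - (P \<union> F)) x"
    if "x \<in> X - F" "X = component (V - P) x0" "x0 \<in> V - P" for X x x0
  proof -
    have "V - P - F = V - (P \<union> F)" by blast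
    then show ?thesis using component_of_component_Diff[of x "V - P" x0 F] that by simp
  qed
  obtain c where c: "c \<in> L - F" "infinite (component (L - F) c)"
    using infinite_component_exists[OF _ l(3) F] connected_component l(2) by blast
  define U where "U = V - (P \<union> F)"
  have A: "component (K - F) a = component U a" "component (K - F) b = component U b"
    and C: "component (L - F) c = component U c"
    using restrict ab c(1) k l unfolding U_def by blast+
  have mem: "component U x \<in> infinite_components (P \<union> F)" if "x \<in> V - P - F" "infinite (component U x)" for x
    using that infinite_componentsI[of x "P \<union> F"] unfolding U_def by auto
  show "component (K - F) a = component (K - F) b"
  proof (rule ccontr)
    assume ne: "component (K - F) a \<noteq> component (K - F) b"
    have "component (K - F) a \<subseteq> K" "component (K - F) b \<subseteq> K"
      using component_subset[OF ab(1)] component_subset[OF ab(2)] by auto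
    moreover have "c \<in> component (L - F) c" "c \<in> L" "K \<inter> L = {}"
      using c(1) infinite_components_disjoint[OF K L KL] by auto
    ultimately have ac: "component U a \<noteq> component U c" and bc: "component U b \<noteq> component U c"
      using A C in_component[of c U] by blast+
    have "a \<in> V - P - F" "b \<in> V - P - F" "c \<in> V - P - F"
      using ab c(1) infinite_components_subset[OF K] infinite_components_subset[OF L] by auto
    then have sub: "{component U a, component U b, component U c} \<subseteq> infinite_components (P \<union> F)"
      using mem inf c(2) A C by simp
    have fin: "finite (infinite_components (P \<union> F))" using bd F fP by blast
    have ab': "component U a \<noteq> component U b" using ne A by simp
    have "3 \<le> card (infinite_components (P \<union> F))" by (rule three_le_card[OF fin sub ab' ac bc])
    then show False using bd[of "P \<union> F"] F fP by simp
  qed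
qed

lemma one_ended_cofinite_superset:
  assumes oe: "one_ended L" and LN: "L \<subseteq> N" and fin: "finite (N - L)"
  shows "one_ended N"
  unfolding one_ended_def
proof (intro allI impI)
  fix F a b assume F: "finite F" and ab: "a \<in> N - F" "b \<in> N - F"
    and inf: "infinite (component (N - F) a)" "infinite (component (N - F) b)"
  have core: "\<exists>x \<in> L - F. x \<in> component (N - F) y \<and> infinite (component (L - F) x)"
    if y: "y \<in> N - F" "infinite (component (N - F) y)" for y
  proof -
    obtain x where x: "x \<in> component (N - F) y - (N - L)"
      "infinite (component (component (N - F) y - (N - L)) x)"
      using infinite_component_exists[OF connected_component y(2) fin] by blast
    have "component (component (N - F) y - (N - L)) x = component (N - F - (N - L)) x"
      by (rule component_of_component_Diff[OF x(1) y(1)])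
    moreover have "N - F - (N - L) = L - F" using LN by blast
    moreover have "x \<in> L - F" using x(1) component_subset[OF y(1)] by blast
    ultimately show ?thesis using x by auto
  qed
  obtain x where x: "x \<in> L - F" "x \<in> component (N - F) a" "infinite (component (L - F) x)"
    using core[OF ab(1) inf(1)] by blast
  obtain x' where x': "x' \<in> L - F" "x' \<in> component (N - F) b" "infinite (component (L - F) x')"
    using core[OF ab(2) inf(2)] by blast
  have "component (L - F) x = component (L - F) x'"
    using oe F x x' unfolding one_ended_def by blast
  then have "x \<in> component (N - F) x'"
    using component_mono[of "L - F" "N - F" x'] LN in_component[of x "L - F"] by blast
  then show "component (N - F) a = component (N - F) b"
    using x(2) x'(2) component_eq by metis
qed

text \<open>The two halves are one of the two infinite components \<open>K\<close>, \<open>L\<close> of \<open>V - P\<close> and its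
  complement, which differs from the other one only by finitely many vertices.\<close>

lemma two_ended_split:
  assumes cV: "connected_set V"
    and bd: "\<And>F. finite F \<Longrightarrow> finite (infinite_components F) \<and> card (infinite_components F) \<le> 2"
    and fP: "finite P" and PV: "P \<subseteq> V" and cP: "connected_set P"
    and two: "card (infinite_components P) = 2"
  shows "\<exists>K N. K \<union> N = V \<and> K \<inter> N = {} \<and> connected_set K \<and> connected_set N
    \<and> infinite K \<and> infinite N \<and> one_ended K \<and> one_ended N \<and> (\<exists>a\<in>N. \<exists>b\<in>K. adj a b)"
proof -
  obtain K L where KL: "infinite_components P = {K, L}" "K \<noteq> L" using two by (meson card_2_iff)
  then have K: "K \<in> infinite_components P" and L: "L \<in> infinite_components P" by auto
  obtain k where k: "k \<in> V - P" "K = component (V - P) k" "infinite K"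
    using K unfolding infinite_components_def by blast
  have inf_L: "infinite L" using L unfolding infinite_components_def by blast
  have KLsub: "K \<subseteq> V - P" "L \<subseteq> V - P" "K \<inter> L = {}"
    using infinite_components_subset[OF K] infinite_components_subset[OF L]
      infinite_components_disjoint[OF K L KL(2)] by auto
  define N where "N = V - K"
  have "P \<noteq> {}"
  proof
    assume "P = {}"
    then have "X = V" if "X \<in> infinite_components P" for X
      using that component_of_connected[OF cV] unfolding infinite_components_def by auto
    then show False using K L KL(2) by blast
  qed
  then obtain p0 where p0: "p0 \<in> P" by blast
  have cN: "connected_set N"
    unfolding N_def k(2) using connected_Diff_component[OF cV PV cP p0 k(1)] .
  have LN: "L \<subseteq> N" using KLsub unfolding N_def by blast
  have "N - L - P \<subseteq> {x \<in> V - P. finite (component (V - P) x)}"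
  proof
    fix x assume x: "x \<in> N - L - P"
    then have "component (V - P) x \<notin> infinite_components P"
      using KL(1) in_component[of x "V - P"] unfolding N_def by blast
    then show "x \<in> {x \<in> V - P. finite (component (V - P) x)}"
      using x infinite_componentsI[of x P] unfolding N_def by blast
  qed
  then have "finite (N - L)"
    using finite_vertices_in_finite_components[OF cV fP] fP by (meson finite_Diff2 finite_subset)
  then have "one_ended N"
    using one_ended_cofinite_superset[OF one_ended_infinite_component[OF bd fP L K] LN] KL(2)
    by metis
  moreover have "one_ended K" using one_ended_infinite_component[OF bd fP K L KL(2)] .
  moreover have "connected_set K" unfolding k(2) by (rule connected_component)
  moreover have "infinite N" using LN inf_L finite_subset by blast
  moreover have "\<exists>a\<in>N. \<exists>b\<in>K. adj a b"
  proof -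
    have "reach V k p0" using cV k(1) p0 PV unfolding connected_set_def by blast
    moreover have "k \<in> K" "p0 \<notin> K" using k(2) p0 KLsub by auto
    ultimately obtain x y where "x \<in> K" "y \<notin> K" "adj x y" "y \<in> V"
      using reach_exit by blast
    then show ?thesis unfolding N_def using adj_sym by blast
  qed
  moreover have "K \<union> N = V" "K \<inter> N = {}" using KLsub unfolding N_def by auto
  ultimately show ?thesis using cN k(3) by blast
qed

end

section \<open>Cayley graphs and Hopf\<close>

locale cayley_graph = group G for G :: "('a, 'b) monoid_scheme" (structure) +
  fixes S :: "'a set"
  assumes finite_S: "finite S" and S_carrier: "S \<subseteq> carrier G"
    and generate_S: "generate G S = carrier G"
begin

definition cay_adj :: "'a \<Rightarrow> 'a \<Rightarrow> bool" where
  "cay_adj a b \<longleftrightarrow> a \<in> carrier G \<and> b \<in> carrier G \<and> (\<exists>s\<in>S. b = a \<otimes> s \<or> b = a \<otimes> inv s)"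

sublocale Cay: locally_finite_graph "carrier G" cay_adj
proof
  fix a b
  show "cay_adj a b \<Longrightarrow> a \<in> carrier G \<and> b \<in> carrier G" unfolding cay_adj_def by blast
  show "cay_adj a b \<Longrightarrow> cay_adj b a"
  proof -
    assume "cay_adj a b"
    then obtain s where s: "s \<in> S" "b = a \<otimes> s \<or> b = a \<otimes> inv s" and ab: "a \<in> carrier G" "b \<in> carrier G"
      unfolding cay_adj_def by blast
    then have "a = b \<otimes> inv s \<or> a = b \<otimes> s" using S_carrier by (auto simp: m_assoc)
    then show "cay_adj b a" unfolding cay_adj_def using s(1) ab by blast
  qed
  have "{b. cay_adj a b} \<subseteq> (\<lambda>s. a \<otimes> s) ` S \<union> (\<lambda>s. a \<otimes> inv s) ` S" unfolding cay_adj_def by blast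
  then show "finite {b. cay_adj a b}" using finite_S by (meson finite_Un finite_imageI finite_subset)
qed

lemma cay_adj_translate: "g \<in> carrier G \<Longrightarrow> cay_adj a b \<Longrightarrow> cay_adj (g \<otimes> a) (g \<otimes> b)"
proof -
  assume g: "g \<in> carrier G" and "cay_adj a b"
  then obtain s where s: "s \<in> S" "b = a \<otimes> s \<or> b = a \<otimes> inv s" and ab: "a \<in> carrier G" "b \<in> carrier G"
    unfolding cay_adj_def by blast
  then have "g \<otimes> b = g \<otimes> a \<otimes> s \<or> g \<otimes> b = g \<otimes> a \<otimes> inv s" using g S_carrier by (auto simp: m_assoc)
  then show ?thesis unfolding cay_adj_def using g ab s(1) by auto
qed

lemma reach_translate:
  assumes g: "g \<in> carrier G" and "Cay.reach W a b"
  shows "Cay.reach ((\<otimes>) g ` W) (g \<otimes> a) (g \<otimes> b)"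
  using assms(2) unfolding Cay.reach_def
proof (induction rule: rtranclp_induct)
  case (step y z)
  then show ?case using cay_adj_translate[OF g] by (auto intro: rtranclp.rtrancl_into_rtrancl)
qed simp

lemma translate_Diff:
  "g \<in> carrier G \<Longrightarrow> P \<subseteq> carrier G \<Longrightarrow> (\<otimes>) g ` (carrier G - P) = carrier G - (\<otimes>) g ` P"
  using inj_on_image_set_diff[OF inj_on_cmult, of g "carrier G" P] surj_const_mult[of g] by simp

lemma translate_inv_translate: "g \<in> carrier G \<Longrightarrow> P \<subseteq> carrier G \<Longrightarrow> (\<otimes>) (inv g) ` (\<otimes>) g ` P = P"
proof -
  assume g: "g \<in> carrier G" and P: "P \<subseteq> carrier G"
  have "inv g \<otimes> (g \<otimes> p) = p" if "p \<in> P" for p using g P that by (simp add: m_assoc[symmetric] subsetD)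
  then show ?thesis by (simp add: image_image)
qed

lemma reach_one: "h \<in> generate G S \<Longrightarrow> Cay.reach (carrier G) \<one> h"
proof (induction rule: generate.induct)
  case one then show ?case by simp
next
  case (incl h)
  then have "cay_adj \<one> h" unfolding cay_adj_def using S_carrier by (intro conjI bexI[of _ h]) auto
  then show ?case using Cay.adj_in_V by (auto intro: Cay.reach_step)
next
  case (inv h)
  then have "cay_adj \<one> (inv h)" unfolding cay_adj_def using S_carrier by (intro conjI bexI[of _ h]) auto
  then show ?case using Cay.adj_in_V by (auto intro: Cay.reach_step)
next
  case (eng h1 h2)
  have h1: "h1 \<in> carrier G" using eng(1) generate_S by simp
  have "Cay.reach (carrier G) h1 (h1 \<otimes> h2)"
    using reach_translate[OF h1 eng(4)] surj_const_mult[OF h1] h1 by simp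
  then show ?case using eng(3) Cay.reach_trans by blast
qed

lemma connected_carrier: "Cay.connected_set (carrier G)"
  unfolding Cay.connected_set_def
proof (intro ballI)
  fix a b assume "a \<in> carrier G" "b \<in> carrier G"
  then have "Cay.reach (carrier G) \<one> a" "Cay.reach (carrier G) \<one> b" using reach_one generate_S by auto
  then show "Cay.reach (carrier G) a b" using Cay.reach_sym Cay.reach_trans by blast
qed

lemma component_translate:
  assumes g: "g \<in> carrier G" and P: "P \<subseteq> carrier G" and a: "a \<in> carrier G - P"
  shows "Cay.component (carrier G - (\<otimes>) g ` P) (g \<otimes> a) = (\<otimes>) g ` Cay.component (carrier G - P) a"
proof
  show "(\<otimes>) g ` Cay.component (carrier G - P) a \<subseteq> Cay.component (carrier G - (\<otimes>) g ` P) (g \<otimes> a)"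
  proof
    fix y assume "y \<in> (\<otimes>) g ` Cay.component (carrier G - P) a"
    then obtain x where x: "Cay.reach (carrier G - P) a x" "y = g \<otimes> x" unfolding Cay.component_def by blast
    have "Cay.reach ((\<otimes>) g ` (carrier G - P)) (g \<otimes> a) (g \<otimes> x)" by (rule reach_translate[OF g x(1)])
    then show "y \<in> Cay.component (carrier G - (\<otimes>) g ` P) (g \<otimes> a)"
      unfolding Cay.component_def translate_Diff[OF g P] using x(2) by simp
  qed
  show "Cay.component (carrier G - (\<otimes>) g ` P) (g \<otimes> a) \<subseteq> (\<otimes>) g ` Cay.component (carrier G - P) a"
  proof
    fix y assume "y \<in> Cay.component (carrier G - (\<otimes>) g ` P) (g \<otimes> a)"
    then have c: "Cay.reach (carrier G - (\<otimes>) g ` P) (g \<otimes> a) y" unfolding Cay.component_def by blast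
    have yG: "y \<in> carrier G" using Cay.reach_target[OF c] g a by auto
    have "(\<otimes>) (inv g) ` (carrier G - (\<otimes>) g ` P) = carrier G - P"
      using translate_Diff[of "inv g" "(\<otimes>) g ` P"] translate_inv_translate[OF g P] g P by auto
    then have "Cay.reach (carrier G - P) a (inv g \<otimes> y)"
      using reach_translate[OF inv_closed[OF g] c] g a by (simp add: m_assoc[symmetric])
    moreover have "y = g \<otimes> (inv g \<otimes> y)" using g yG by (simp add: m_assoc[symmetric])
    ultimately show "y \<in> (\<otimes>) g ` Cay.component (carrier G - P) a" unfolding Cay.component_def by blast
  qed
qed

lemma card_infinite_components_translate:
  assumes g: "g \<in> carrier G" and P: "P \<subseteq> carrier G"
    and fin: "finite (Cay.infinite_components ((\<otimes>) g ` P))"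
  shows "card (Cay.infinite_components P) \<le> card (Cay.infinite_components ((\<otimes>) g ` P))"
proof -
  have "Cay.infinite_components P \<subseteq> Pow (carrier G)" using Cay.infinite_components_subset by blast
  then have "inj_on (image ((\<otimes>) g)) (Cay.infinite_components P)"
    by (rule inj_on_subset[OF inj_on_image_Pow[OF inj_on_cmult[OF g]]])
  moreover have "image ((\<otimes>) g) ` Cay.infinite_components P \<subseteq> Cay.infinite_components ((\<otimes>) g ` P)"
  proof
    fix X assume "X \<in> image ((\<otimes>) g) ` Cay.infinite_components P"
    then obtain a where a: "a \<in> carrier G - P" "infinite (Cay.component (carrier G - P) a)"
      "X = (\<otimes>) g ` Cay.component (carrier G - P) a"
      unfolding Cay.infinite_components_def by blast
    have "inj_on ((\<otimes>) g) (Cay.component (carrier G - P) a)"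
      using inj_on_subset[OF inj_on_cmult[OF g]] Cay.component_subset[OF a(1)] by blast
    then have "infinite X" using a(2,3) finite_imageD by blast
    have "g \<otimes> a \<in> carrier G - (\<otimes>) g ` P" using translate_Diff[OF g P] a(1) by blast
    then show "X \<in> Cay.infinite_components ((\<otimes>) g ` P)"
      using Cay.infinite_componentsI[of "g \<otimes> a" "(\<otimes>) g ` P"] component_translate[OF g P a(1)] a(3)
        \<open>infinite X\<close> by simp
  qed
  ultimately show ?thesis using card_inj_on_le[OF _ _ fin] by blast
qed

lemma connected_translate:
  "g \<in> carrier G \<Longrightarrow> Cay.connected_set P \<Longrightarrow> Cay.connected_set ((\<otimes>) g ` P)"
  unfolding Cay.connected_set_def using reach_translate by blast

lemma translate_into_infinite_component:
  assumes fP: "finite P" and PG: "P \<subseteq> carrier G" and cP: "Cay.connected_set P" and one: "\<one> \<in> P"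
    and K: "K \<in> Cay.infinite_components P"
  shows "\<exists>g\<in>K. (\<otimes>) g ` P \<inter> P = {} \<and> (\<otimes>) g ` P \<subseteq> K"
proof -
  obtain k where k: "k \<in> carrier G - P" "K = Cay.component (carrier G - P) k" "infinite K"
    using K unfolding Cay.infinite_components_def by blast
  have "finite ((\<lambda>(x, y). x \<otimes> inv y) ` (P \<times> P))" using fP by simp
  then obtain g where g: "g \<in> K" "g \<notin> (\<lambda>(x, y). x \<otimes> inv y) ` (P \<times> P)"
    using k(3) by (meson finite_subset subsetI)
  have gG: "g \<in> carrier G" using g(1) Cay.infinite_components_subset[OF K] by blast
  have disj: "(\<otimes>) g ` P \<inter> P = {}"
  proof (rule ccontr)
    assume "(\<otimes>) g ` P \<inter> P \<noteq> {}"
    then obtain p q where "p \<in> P" "q \<in> P" "g \<otimes> p = q" by blast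
    moreover from this have "g = q \<otimes> inv p" using gG PG by (metis inv_solve_right subsetD)
    ultimately show False using g(2) by force
  qed
  have "(\<otimes>) g ` P \<subseteq> carrier G - P" using gG PG disj by auto
  moreover have "g \<in> (\<otimes>) g ` P" using one gG by (metis image_eqI r_one)
  ultimately have "(\<otimes>) g ` P \<subseteq> Cay.component (carrier G - P) g"
    using Cay.connected_subset_component[OF connected_translate[OF gG cP]] by blast
  then show ?thesis using g(1) disj Cay.component_eq k(2) by blast
qed

text \<open>If some finite connected \<open>P \<ni> \<one>\<close> realises the maximal number \<open>m \<ge> 3\<close> of
  infinite components, pick \<open>g\<close> far inside one of them, \<open>K\<close>, so that \<open>g P\<close> is disjoint from \<open>P\<close>
  and lies in \<open>K\<close>. Then the \<open>m - 1\<close> other infinite components of \<open>V - P\<close> and the at least \<open>m - 1\<close>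
  infinite components of \<open>V - g P\<close> not containing \<open>P\<close> (all inside \<open>K\<close>) are distinct infinite
  components of \<open>V - (P \<union> g P)\<close>, and \<open>2 (m - 1) > m\<close>.\<close>

lemma at_most_two_ends:
  assumes bd: "\<And>F. finite F \<Longrightarrow> finite (Cay.infinite_components F) \<and> card (Cay.infinite_components F) \<le> m"
    and fP: "finite P" and PG: "P \<subseteq> carrier G" and cP: "Cay.connected_set P" and one: "\<one> \<in> P"
    and m: "card (Cay.infinite_components P) = m"
  shows "m \<le> 2"
proof (rule ccontr)
  assume m3: "\<not> m \<le> 2"
  then have "Cay.infinite_components P \<noteq> {}" using m by auto
  then obtain K where K: "K \<in> Cay.infinite_components P" by blast
  obtain g where g: "g \<in> K" "(\<otimes>) g ` P \<inter> P = {}" "(\<otimes>) g ` P \<subseteq> K"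
    using translate_into_infinite_component[OF fP PG cP one K] by blast
  obtain k where k: "k \<in> carrier G - P" "K = Cay.component (carrier G - P) k"
    using K unfolding Cay.infinite_components_def by blast
  have gG: "g \<in> carrier G" using g Cay.infinite_components_subset[OF K] by blast
  define gP where "gP = (\<otimes>) g ` P"
  have disj: "gP \<inter> P = {}" and gPK: "gP \<subseteq> K" using g unfolding gP_def by auto
  have gPG: "gP \<subseteq> carrier G" "finite gP" unfolding gP_def using gG PG fP by auto
  have cgP: "Cay.connected_set gP" unfolding gP_def using connected_translate[OF gG cP] .
  have ggP: "g \<in> gP" unfolding gP_def using one gG by (metis image_eqI r_one)
  define Q where "Q = Cay.component (carrier G - gP) \<one>"
  have PQ: "P \<subseteq> Q"
    unfolding Q_def using Cay.connected_subset_component[OF cP] PG disj one by blast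
  define A1 where "A1 = Cay.infinite_components P - {K}"
  define A2 where "A2 = Cay.infinite_components gP - {Q}"
  define U where "U = P \<union> gP"
  have A1U: "A1 \<subseteq> Cay.infinite_components U"
  proof
    fix X assume X: "X \<in> A1"
    then have "X \<inter> K = {}" using Cay.infinite_components_disjoint K unfolding A1_def by blast
    then show "X \<in> Cay.infinite_components U"
      unfolding U_def using X gPK Cay.infinite_component_Un[of X P gP] unfolding A1_def by blast
  qed
  have A2U: "X \<in> Cay.infinite_components U \<and> X \<subseteq> K \<and> X \<noteq> {}" if X: "X \<in> A2" for X
  proof -
    obtain a where a: "a \<in> carrier G - gP" "X = Cay.component (carrier G - gP) a" "infinite X"
      using X unfolding A2_def Cay.infinite_components_def by blast
    have "X \<inter> Q = {}" using X a(2) Cay.components_disjoint unfolding A2_def Q_def by blast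
    then have XP: "X \<inter> P = {}" using PQ by blast
    then have "X \<in> Cay.infinite_components (gP \<union> P)"
      using X Cay.infinite_component_Un unfolding A2_def by blast
    moreover have "gP \<union> P = U" unfolding U_def by blast
    moreover have "X \<subseteq> K"
    proof -
      have "X \<subseteq> Cay.component (carrier G - P) g"
        using Cay.component_avoiding_in_component[OF connected_carrier gPG(1) cgP ggP disj a(1)] XP a(2)
        by simp
      then show ?thesis using Cay.component_eq g(1) k(2) by blast
    qed
    ultimately show ?thesis using a(3) by auto
  qed
  have fin: "finite (Cay.infinite_components U)" using bd fP gPG unfolding U_def by blast
  have "A1 \<inter> A2 = {}"
  proof -
    have "Y \<inter> K = {}" if "Y \<in> A1" for Y
      using that Cay.infinite_components_disjoint K unfolding A1_def by blast
    then show ?thesis using A2U by blast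
  qed
  moreover have "A1 \<union> A2 \<subseteq> Cay.infinite_components U" using A1U A2U by blast
  ultimately have "card A1 + card A2 \<le> card (Cay.infinite_components U)"
    using card_Un_disjoint[of A1 A2] card_mono[OF fin] finite_subset[OF _ fin] by (metis le_supE)
  moreover have "card A1 = m - 1" unfolding A1_def using m K bd[OF fP] by simp
  moreover have "card (Cay.infinite_components gP) \<ge> m"
    using card_infinite_components_translate[OF gG PG] bd gPG m unfolding gP_def by blast
  then have "card A2 \<ge> m - 1"
    unfolding A2_def using diff_card_le_card_Diff[of "{Q}" "Cay.infinite_components gP"] by simp
  moreover have "card (Cay.infinite_components U) \<le> m" using bd fP gPG unfolding U_def by blast
  ultimately show False using m3 by linarith
qed

end

section \<open>Hamiltonian paths from finitely many ends\<close>

lemma bij_betw_nat_nonneg: "bij_betw nat {i::int. 0 \<le> i} UNIV"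
  unfolding bij_betw_def
proof
  show "inj_on nat {i::int. 0 \<le> i}" by (intro inj_onI) auto
  show "nat ` {i::int. 0 \<le> i} = UNIV"
  proof (intro equalityI subsetI)
    fix n :: nat show "n \<in> nat ` {i. 0 \<le> i}" by (rule image_eqI[of _ _ "int n"]) auto
  qed auto
qed

text \<open>\<open>glue r r'\<close> runs through \<open>\<dots>, r' 1, r' 0, r 0, r 1, \<dots>\<close>, with \<open>r 0\<close> at index \<open>0\<close>.\<close>

definition glue :: "(nat \<Rightarrow> 'a) \<Rightarrow> (nat \<Rightarrow> 'a) \<Rightarrow> int \<Rightarrow> 'a" where
  "glue r r' i = (if 0 \<le> i then r (nat i) else r' (nat (- i - 1)))"

lemma bij_betw_glue:
  assumes r: "bij_betw r UNIV K" and r': "bij_betw r' UNIV K'" and disj: "K \<inter> K' = {}"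
  shows "bij_betw (glue r r') UNIV (K \<union> K')"
proof -
  have inK: "r n \<in> K" "r' n \<in> K'" for n using r r' bij_betwE by blast+
  have "inj (glue r r')"
  proof (rule injI)
    fix i j assume e: "glue r r' i = glue r r' j"
    have inj: "inj r" "inj r'" using r r' bij_betw_def by auto
    have neq: "r n \<noteq> r' n'" for n n' using inK(1)[of n] inK(2)[of n'] disj by auto
    show "i = j"
    proof (cases "0 \<le> i"; cases "0 \<le> j")
      assume "0 \<le> i" "0 \<le> j"
      then show "i = j" using e inj(1) unfolding glue_def by (simp add: inj_eq)
    next
      assume "\<not> 0 \<le> i" "\<not> 0 \<le> j"
      then show "i = j" using e inj(2) unfolding glue_def by (simp add: inj_eq)
    next
      assume "0 \<le> i" "\<not> 0 \<le> j"
      then show "i = j" using e neq unfolding glue_def by simp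
    next
      assume "\<not> 0 \<le> i" "0 \<le> j"
      then show "i = j" using e neq[symmetric] unfolding glue_def by simp
    qed
  qed
  moreover have "range (glue r r') = K \<union> K'"
  proof (intro equalityI subsetI)
    fix x assume "x \<in> range (glue r r')"
    then show "x \<in> K \<union> K'" using inK unfolding glue_def by auto
  next
    fix x assume "x \<in> K \<union> K'"
    then consider n where "x = r n" | n where "x = r' n"
      using r r' by (metis Un_iff bij_betw_def imageE)
    then show "x \<in> range (glue r r')"
    proof cases
      case 1 then have "glue r r' (int n) = x" unfolding glue_def by simp
      then show ?thesis by (metis rangeI)
    next
      case 2 then have "glue r r' (- int n - 1) = x" unfolding glue_def by simp
      then show ?thesis by (metis rangeI)
    qed
  qed
  ultimately show ?thesis unfolding bij_betw_def by blast
qed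

lemma glue_step:
  assumes R: "\<And>i. R (r i) (r (Suc i))" and R': "\<And>i. R (r' i) (r' (Suc i))"
    and join: "R (r' 0) (r 0)" and sym: "\<And>x y. R x y \<Longrightarrow> R y x"
  shows "R (glue r r' i) (glue r r' (i + 1))"
proof -
  consider "0 \<le> i" | "i = -1" | "i < -1" by linarith
  then show ?thesis
  proof cases
    case 1
    then have "nat (i + 1) = Suc (nat i)" by auto
    then show ?thesis using 1 R unfolding glue_def by simp
  next
    case 2
    then show ?thesis using join unfolding glue_def by simp
  next
    case 3
    then have "nat (- i - 1) = Suc (nat (- (i + 1) - 1))" by auto
    then have "glue r r' i = r' (Suc (nat (- (i + 1) - 1)))" "glue r r' (i + 1) = r' (nat (- (i + 1) - 1))"
      using 3 unfolding glue_def by auto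
    then show ?thesis using sym[OF R'] by simp
  qed
qed

lemma (in group) finite_group_ham_path:
  assumes "finite (carrier G)"
  shows "fin_gen_set G (carrier G) \<and> cayley_ham_path G (carrier G)"
proof
  show "fin_gen_set G (carrier G)" unfolding fin_gen_set_def
    using assms generate_incl[of "carrier G"] generate.incl[of _ "carrier G" G] by blast
  obtain h where h: "bij_betw h {0..<card (carrier G)} (carrier G)"
    using ex_bij_betw_nat_finite[OF assms] by blast
  define I where "I = {0..<int (card (carrier G))}"
  have "bij_betw nat I {0..<card (carrier G)}"
    unfolding I_def bij_betw_def by (auto simp: inj_on_def intro!: image_eqI[of _ nat "int n" for n])
  then have b: "bij_betw (h \<circ> nat) I (carrier G)" using bij_betw_trans h by blast
  have "{g, k} \<in> cay_edges G (carrier G)" if "g \<in> carrier G" "k \<in> carrier G" for g k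
  proof -
    have "k = g \<otimes> (inv g \<otimes> k)" using that by (simp add: m_assoc[symmetric])
    then show ?thesis unfolding cay_edges_def using that by blast
  qed
  then show "cayley_ham_path G (carrier G)" unfolding cayley_ham_path_def int_interval_def
    using b bij_betwE[OF b] by (intro exI[of _ I] exI[of _ "h \<circ> nat"]) (auto simp: I_def)
qed

context cayley_graph
begin

lemma cay_edges_iff: "{u, v} \<in> cay_edges G S \<longleftrightarrow> cay_adj u v"
proof
  assume "{u, v} \<in> cay_edges G S"
  then obtain g h where "{u, v} = {g, h}" "cay_adj g h" unfolding cay_edges_def cay_adj_def by blast
  then show "cay_adj u v" using Cay.adj_sym by (metis doubleton_eq_iff)
next
  assume "cay_adj u v"
  then show "{u, v} \<in> cay_edges G S" unfolding cay_edges_def cay_adj_def by blast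
qed

text \<open>Removing a finite vertex set \<open>F\<close> is the same as removing the finitely many edges at \<open>F\<close>,
  up to the (finite) components inside \<open>F\<close>.\<close>

lemma infinite_components_in_graph_components:
  assumes F: "finite F"
  shows "\<exists>A. finite A \<and> Cay.infinite_components F \<subseteq>
    {X \<in> components (carrier G) (cay_edges G S - A). infinite X}"
proof (intro exI conjI)
  define A where "A = {e \<in> cay_edges G S. e \<inter> F \<noteq> {}}"
  have "A \<subseteq> (\<lambda>(x, y). {x, y}) ` (SIGMA x:F. {y. cay_adj x y})"
  proof
    fix e assume "e \<in> A"
    then obtain g h where gh: "e = {g, h}" "cay_adj g h" "g \<in> F \<or> h \<in> F"
      unfolding A_def cay_edges_def cay_adj_def by blast
    then have "e = {g, h} \<and> g \<in> F \<and> cay_adj g h \<or> e = {h, g} \<and> h \<in> F \<and> cay_adj h g"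
      using Cay.adj_sym by blast
    then show "e \<in> (\<lambda>(x, y). {x, y}) ` (SIGMA x:F. {y. cay_adj x y})" by force
  qed
  moreover have "finite (SIGMA x:F. {y. cay_adj x y})" using F Cay.finite_neighbours by blast
  ultimately show "finite A" by (meson finite_imageI finite_subset)
  have rel: "(\<lambda>u v. {u, v} \<in> cay_edges G S - A) = (\<lambda>x y. cay_adj x y \<and> x \<in> carrier G - F \<and> y \<in> carrier G - F)"
    unfolding A_def using cay_edges_iff Cay.adj_in_V by (intro ext) blast
  show "Cay.infinite_components F \<subseteq> {X \<in> components (carrier G) (cay_edges G S - A). infinite X}"
    unfolding Cay.infinite_components_def components_def Cay.component_def Cay.reach_def rel by blast
qed

lemma infinite_components_bounded:
  assumes "graph_finitely_many_ends (carrier G) (cay_edges G S)"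
  shows "\<exists>n. \<forall>F. finite F \<longrightarrow> finite (Cay.infinite_components F) \<and> card (Cay.infinite_components F) \<le> n"
proof -
  obtain n where n: "\<And>A. finite A \<Longrightarrow> finite {X \<in> components (carrier G) (cay_edges G S - A). infinite X}
      \<and> card {X \<in> components (carrier G) (cay_edges G S - A). infinite X} \<le> n"
    using assms unfolding graph_finitely_many_ends_def Let_def by blast
  have "finite (Cay.infinite_components F) \<and> card (Cay.infinite_components F) \<le> n" if "finite F" for F
    using infinite_components_in_graph_components[OF that] n by (meson card_mono finite_subset order_trans)
  then show ?thesis by blast
qed

lemma max_infinite_components:
  assumes "\<And>F. finite F \<Longrightarrow> finite (Cay.infinite_components F) \<and> card (Cay.infinite_components F) \<le> n"
  shows "\<exists>P m. finite P \<and> P \<subseteq> carrier G \<and> \<one> \<in> P \<and> Cay.connected_set P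
    \<and> card (Cay.infinite_components P) = m
    \<and> (\<forall>F. finite F \<longrightarrow> finite (Cay.infinite_components F) \<and> card (Cay.infinite_components F) \<le> m)"
proof -
  define M where "M = {card (Cay.infinite_components F) | F. finite F}"
  have fM: "finite M" using finite_subset[of M "{..n}"] assms unfolding M_def by blast
  have "card (Cay.infinite_components {}) \<in> M" unfolding M_def by blast
  then have "Max M \<in> M" using Max_in[OF fM] by blast
  then obtain F1 where F1: "finite F1" "card (Cay.infinite_components F1) = Max M" unfolding M_def by auto
  have bd: "finite (Cay.infinite_components F) \<and> card (Cay.infinite_components F) \<le> Max M" if "finite F" for F
    using assms that Max_ge[OF fM] unfolding M_def by blast
  obtain P where P: "finite P" "P \<subseteq> carrier G" "\<one> \<in> P" "F1 \<inter> carrier G \<subseteq> P" "Cay.connected_set P"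
    using Cay.finite_connected_superset[OF connected_carrier, of \<one> "F1 \<inter> carrier G"] F1(1) by auto
  have "Cay.infinite_components (F1 \<inter> carrier G) = Cay.infinite_components F1"
  proof -
    have "carrier G - F1 \<inter> carrier G = carrier G - F1" by blast
    then show ?thesis unfolding Cay.infinite_components_def by simp
  qed
  then have "Max M \<le> card (Cay.infinite_components P)"
    using Cay.card_infinite_components_mono[OF connected_carrier P(1,4)] bd[OF P(1)] F1(2) by simp
  then have "card (Cay.infinite_components P) = Max M" using bd[OF P(1)] by simp
  then show ?thesis using P bd by blast
qed

definition steps :: "'a set" where
  "steps = insert \<one> (S \<union> (\<lambda>s. inv s) ` S)"

definition cube_gens :: "'a set" where
  "cube_gens = (\<lambda>(a, b, c). a \<otimes> b \<otimes> c) ` (steps \<times> steps \<times> steps)"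

lemma steps_carrier: "steps \<subseteq> carrier G"
  unfolding steps_def using S_carrier by auto

lemma fin_gen_set_cube_gens: "fin_gen_set G cube_gens"
proof -
  have "finite cube_gens" unfolding cube_gens_def steps_def using finite_S by simp
  moreover have sub: "cube_gens \<subseteq> carrier G" unfolding cube_gens_def using steps_carrier by auto
  moreover have "S \<subseteq> cube_gens"
  proof
    fix s assume "s \<in> S"
    then have "s = s \<otimes> \<one> \<otimes> \<one>" "s \<in> steps" "\<one> \<in> steps" using S_carrier unfolding steps_def by auto
    then show "s \<in> cube_gens" unfolding cube_gens_def by force
  qed
  then have "carrier G \<subseteq> generate G cube_gens" using generate_S mono_generate by blast
  ultimately show ?thesis unfolding fin_gen_set_def using generate_incl[OF sub] by blast
qed

lemma adj_or_eq_step: "a \<in> carrier G \<Longrightarrow> a = c \<or> cay_adj a c \<Longrightarrow> \<exists>t\<in>steps. c = a \<otimes> t"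
  unfolding steps_def cay_adj_def by force

lemma cube_adj_imp_edge:
  assumes a: "a \<in> carrier G" and "Cay.cube_adj a b"
  shows "{a, b} \<in> cay_edges G cube_gens"
proof -
  obtain c d where cd: "a = c \<or> cay_adj a c" "c = d \<or> cay_adj c d" "d = b \<or> cay_adj d b"
    using assms(2) unfolding Cay.cube_adj_def by blast
  obtain t1 where t1: "t1 \<in> steps" "c = a \<otimes> t1" using adj_or_eq_step[OF a cd(1)] by blast
  have c: "c \<in> carrier G" using t1 a steps_carrier by auto
  obtain t2 where t2: "t2 \<in> steps" "d = c \<otimes> t2" using adj_or_eq_step[OF c cd(2)] by blast
  have d: "d \<in> carrier G" using t2 c steps_carrier by auto
  obtain t3 where t3: "t3 \<in> steps" "b = d \<otimes> t3" using adj_or_eq_step[OF d cd(3)] by blast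
  have "t1 \<in> carrier G" "t2 \<in> carrier G" "t3 \<in> carrier G" using t1 t2 t3 steps_carrier by auto
  then have "b = a \<otimes> (t1 \<otimes> t2 \<otimes> t3)" "b \<in> carrier G" using t1 t2 t3 a by (simp_all add: m_assoc)
  moreover have "t1 \<otimes> t2 \<otimes> t3 \<in> cube_gens" unfolding cube_gens_def using t1 t2 t3 by force
  ultimately show ?thesis unfolding cay_edges_def using a by blast
qed

lemma cayley_ham_path_of_cube_path:
  assumes "int_interval I" "bij_betw f I (carrier G)"
    and "\<And>i. i \<in> I \<Longrightarrow> i + 1 \<in> I \<Longrightarrow> Cay.cube_adj (f i) (f (i + 1))"
  shows "cayley_ham_path G cube_gens"
  unfolding cayley_ham_path_def
proof (intro exI conjI allI impI)
  fix i assume "i \<in> I" "i + 1 \<in> I"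
  then show "{f i, f (i + 1)} \<in> cay_edges G cube_gens"
    using assms(3) cube_adj_imp_edge bij_betwE[OF assms(2)] by blast
qed (use assms in auto)

lemma one_ended_cayley_ham_path:
  assumes "Cay.one_ended (carrier G)" "infinite (carrier G)"
  shows "cayley_ham_path G cube_gens"
proof -
  obtain r where r: "bij_betw r UNIV (carrier G)" "\<And>i. Cay.cube_adj (r i) (r (Suc i))"
    using Cay.one_ended_ray[OF connected_carrier assms(2,1) one_closed] by blast
  have b: "bij_betw (r \<circ> nat) {i. 0 \<le> i} (carrier G)" using bij_betw_trans[OF bij_betw_nat_nonneg r(1)] .
  show ?thesis
  proof (rule cayley_ham_path_of_cube_path[OF _ b])
    show "int_interval {i. 0 \<le> i}" unfolding int_interval_def by auto
    fix i :: int assume "i \<in> {i. 0 \<le> i}"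
    then have "nat (i + 1) = Suc (nat i)" by auto
    then show "Cay.cube_adj ((r \<circ> nat) i) ((r \<circ> nat) (i + 1))" using r(2) by simp
  qed
qed

lemma two_ended_cayley_ham_path:
  assumes bd: "\<And>F. finite F \<Longrightarrow> finite (Cay.infinite_components F) \<and> card (Cay.infinite_components F) \<le> 2"
    and P: "finite P" "P \<subseteq> carrier G" "Cay.connected_set P" "card (Cay.infinite_components P) = 2"
  shows "cayley_ham_path G cube_gens"
proof -
  obtain K N where KN: "K \<union> N = carrier G" "K \<inter> N = {}" "Cay.connected_set K" "Cay.connected_set N"
    "infinite K" "infinite N" "Cay.one_ended K" "Cay.one_ended N" "\<exists>a\<in>N. \<exists>b\<in>K. cay_adj a b"
    using Cay.two_ended_split[OF connected_carrier bd P] by blast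
  obtain a b where ab: "a \<in> N" "b \<in> K" "cay_adj a b" using KN(9) by blast
  obtain rK where rK: "bij_betw rK UNIV K" "rK 0 = b" "\<forall>i. Cay.cube_adj (rK i) (rK (Suc i))"
    using Cay.one_ended_ray[OF KN(3,5,7) ab(2)] by blast
  obtain rN where rN: "bij_betw rN UNIV N" "rN 0 = a" "\<forall>i. Cay.cube_adj (rN i) (rN (Suc i))"
    using Cay.one_ended_ray[OF KN(4,6,8) ab(1)] by blast
  have "Cay.cube_adj (rN 0) (rK 0)" using rK(2) rN(2) ab(3) Cay.adj_imp_cube_adj by simp
  then have "Cay.cube_adj (glue rK rN i) (glue rK rN (i + 1))" for i
    using glue_step rK(3) rN(3) Cay.cube_adj_sym by metis
  moreover have "bij_betw (glue rK rN) UNIV (carrier G)"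
    using bij_betw_glue[OF rK(1) rN(1) KN(2)] KN(1) by simp
  ultimately show ?thesis
    by (intro cayley_ham_path_of_cube_path[of UNIV]) (simp_all add: int_interval_def)
qed

lemma cayley_ham_path_if_bounded_ends:
  assumes "infinite (carrier G)"
    and "\<And>F. finite F \<Longrightarrow> finite (Cay.infinite_components F) \<and> card (Cay.infinite_components F) \<le> n"
  shows "cayley_ham_path G cube_gens"
proof -
  obtain P m where P: "finite P" "P \<subseteq> carrier G" "\<one> \<in> P" "Cay.connected_set P"
    "card (Cay.infinite_components P) = m"
    and bd: "\<forall>F. finite F \<longrightarrow> finite (Cay.infinite_components F) \<and> card (Cay.infinite_components F) \<le> m"
    using max_infinite_components[OF assms(2)] by blast
  have "m \<le> 2" by (rule at_most_two_ends[OF bd[rule_format] P(1,2,4,3,5)])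
  then consider "m \<le> 1" | "m = 2" by linarith
  then show ?thesis
  proof cases
    case 1
    then have "finite (Cay.infinite_components F) \<and> card (Cay.infinite_components F) \<le> 1"
      if "finite F" for F using bd that by auto
    then have "Cay.one_ended (carrier G)" by (rule Cay.one_ended_if_at_most_one_end)
    then show ?thesis by (rule one_ended_cayley_ham_path[OF _ assms(1)])
  next
    case 2
    then show ?thesis using two_ended_cayley_ham_path[OF _ P(1,2,4)] bd[rule_format] P(5) by simp
  qed
qed

end

section \<open>Finitely many ends from a Hamiltonian path\<close>

lemma rtranclp_int_chain:
  fixes i j :: int
  assumes "i \<le> j" "\<And>k. i \<le> k \<Longrightarrow> k < j \<Longrightarrow> R\<^sup>*\<^sup>* (g k) (g (k + 1))"
  shows "R\<^sup>*\<^sup>* (g i) (g j)"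
  using assms
proof (induction j rule: int_ge_induct)
  case (step j)
  have "R\<^sup>*\<^sup>* (g i) (g j)" by (rule step.IH) (simp add: step.prems)
  moreover have "R\<^sup>*\<^sup>* (g j) (g (j + 1))" using step.prems step.hyps(1) by simp
  ultimately show ?case by (rule rtranclp_trans)
qed simp

lemma rtranclp_enumeration_tails:
  fixes f :: "int \<Rightarrow> 'a"
  assumes I: "int_interval I" and fBad: "finite Bad"
    and step: "\<And>i. i \<in> I \<Longrightarrow> i + 1 \<in> I \<Longrightarrow> i \<notin> Bad \<Longrightarrow> i + 1 \<notin> Bad \<Longrightarrow> R\<^sup>*\<^sup>* (f i) (f (i + 1))"
  shows "\<exists>N. \<forall>i j. i \<in> I \<longrightarrow> j \<in> I \<longrightarrow> i \<le> j \<longrightarrow> N \<le> i \<or> j \<le> - N \<longrightarrow> R\<^sup>*\<^sup>* (f i) (f j)"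
proof (intro exI allI impI)
  define N where "N = Max (insert 0 (abs ` Bad)) + 1"
  have good: "i \<notin> Bad" if "N \<le> \<bar>i\<bar>" for i
    using that Max_ge[of "insert 0 (abs ` Bad)" "\<bar>i\<bar>"] fBad unfolding N_def by fastforce
  fix i j assume ij: "i \<in> I" "j \<in> I" "i \<le> j" "N \<le> i \<or> j \<le> - N"
  show "R\<^sup>*\<^sup>* (f i) (f j)"
  proof (rule rtranclp_int_chain[OF ij(3)])
    fix k assume k: "i \<le> k" "k < j"
    have "i \<le> k + 1" "k + 1 \<le> j" "k \<le> j" using k by linarith+
    then have "k \<in> I" "k + 1 \<in> I" using I ij(1,2) k(1) unfolding int_interval_def by blast+
    moreover have "N \<le> \<bar>k\<bar>" "N \<le> \<bar>k + 1\<bar>" using k ij(4) by linarith+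
    ultimately show "R\<^sup>*\<^sup>* (f k) (f (k + 1))" using step[of k] good[of k] good[of "k + 1"] by blast
  qed
qed

lemma rtranclp_class_eq:
  assumes "symp R" "R\<^sup>*\<^sup>* x y"
  shows "{z. R\<^sup>*\<^sup>* x z} = {z. R\<^sup>*\<^sup>* y z}"
proof (intro Collect_cong iffI)
  have yx: "R\<^sup>*\<^sup>* y x" using symp_rtranclp[OF assms(1)] assms(2) by (rule sympD)
  fix z
  show "R\<^sup>*\<^sup>* y z" if "R\<^sup>*\<^sup>* x z" using yx that by (rule rtranclp_trans)
  show "R\<^sup>*\<^sup>* x z" if "R\<^sup>*\<^sup>* y z" using assms(2) that by (rule rtranclp_trans)
qed

lemma infinite_class_meets_tail:
  fixes f :: "int \<Rightarrow> 'a" and N :: int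
  assumes f: "bij_betw f I V" and V: "{y. R\<^sup>*\<^sup>* x y} \<subseteq> V" and inf: "infinite {y. R\<^sup>*\<^sup>* x y}"
  shows "\<exists>i\<in>I. (N \<le> i \<or> i \<le> - N) \<and> R\<^sup>*\<^sup>* x (f i)"
proof -
  have "finite (f ` {i \<in> I. - N < i \<and> i < N})"
    by (rule finite_imageI, rule finite_subset[of _ "{- N<..<N}"]) auto
  then have "{y. R\<^sup>*\<^sup>* x y} - f ` {i \<in> I. - N < i \<and> i < N} \<noteq> {}"
    using inf by (metis Diff_eq_empty_iff finite_subset)
  then obtain y where y: "R\<^sup>*\<^sup>* x y" "y \<notin> f ` {i \<in> I. - N < i \<and> i < N}" by blast
  then have "y \<in> V" using V by blast
  then obtain i where i: "i \<in> I" "y = f i" using f by (metis bij_betw_def imageE)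
  have "N \<le> i \<or> i \<le> - N"
  proof (rule ccontr)
    assume "\<not> (N \<le> i \<or> i \<le> - N)"
    then have "i \<in> {i \<in> I. - N < i \<and> i < N}" using i(1) by simp
    then have "y \<in> f ` {i \<in> I. - N < i \<and> i < N}" unfolding i(2) by (rule imageI)
    then show False using y(2) by contradiction
  qed
  then show ?thesis using i y(1) by blast
qed

text \<open>All vertices far out on the same side of the enumeration lie in one component.\<close>

lemma at_most_two_infinite_components_of_enumeration:
  fixes E :: "'a set set" and f :: "int \<Rightarrow> 'a"
  assumes I: "int_interval I" and f: "bij_betw f I V" and fBad: "finite Bad"
    and EV: "\<And>u v. {u, v} \<in> E \<Longrightarrow> v \<in> V"
    and step: "\<And>i. i \<in> I \<Longrightarrow> i + 1 \<in> I \<Longrightarrow> i \<notin> Bad \<Longrightarrow> i + 1 \<notin> Bad \<Longrightarrow>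
      (\<lambda>u v. {u, v} \<in> E)\<^sup>*\<^sup>* (f i) (f (i + 1))"
  shows "finite {X \<in> components V E. infinite X} \<and> card {X \<in> components V E. infinite X} \<le> 2"
proof -
  define R where "R = (\<lambda>u v. {u, v} \<in> E)"
  define cls where "cls x = {y. R\<^sup>*\<^sup>* x y}" for x
  have "symp R" unfolding R_def symp_def by (simp add: insert_commute)
  then have cls_eq: "cls x = cls y" if "R\<^sup>*\<^sup>* x y" for x y
    using rtranclp_class_eq[OF _ that] unfolding cls_def by simp
  have cls_V: "cls x \<subseteq> V" if "x \<in> V" for x
  proof
    fix y assume "y \<in> cls x"
    then have "R\<^sup>*\<^sup>* x y" unfolding cls_def by simp
    then show "y \<in> V" using that EV unfolding R_def by (induction rule: rtranclp_induct) auto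
  qed
  obtain N where chain: "\<forall>i j. i \<in> I \<longrightarrow> j \<in> I \<longrightarrow> i \<le> j \<longrightarrow> N \<le> i \<or> j \<le> - N \<longrightarrow> R\<^sup>*\<^sup>* (f i) (f j)"
    using rtranclp_enumeration_tails[where R = R and f = f, OF I fBad step[folded R_def]] by blast
  have far_end: "cls (f i) = cls (f j)" if "i \<in> I" "j \<in> I" "N \<le> i \<and> N \<le> j \<or> i \<le> - N \<and> j \<le> - N" for i j
  proof (cases "i \<le> j")
    case True
    then have "R\<^sup>*\<^sup>* (f i) (f j)" using that chain by auto
    then show ?thesis by (rule cls_eq)
  next
    case False
    then have "R\<^sup>*\<^sup>* (f j) (f i)" using that chain by auto
    then show ?thesis by (rule cls_eq[symmetric])
  qed
  define ip where "ip = (SOME i. i \<in> I \<and> N \<le> i)"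
  define im where "im = (SOME i. i \<in> I \<and> i \<le> - N)"
  have sub: "{X \<in> components V E. infinite X} \<subseteq> {cls (f ip), cls (f im)}"
  proof
    fix X assume "X \<in> {X \<in> components V E. infinite X}"
    then obtain x where x: "x \<in> V" "X = cls x" "infinite X"
      by (auto simp: components_def cls_def R_def)
    then obtain i where i: "i \<in> I" "N \<le> i \<or> i \<le> - N" "R\<^sup>*\<^sup>* x (f i)"
      using infinite_class_meets_tail[OF f cls_V[OF x(1), unfolded cls_def], of N] unfolding cls_def
      by auto
    have X: "X = cls (f i)" using x(2) cls_eq[OF i(3)] by simp
    from i(2) show "X \<in> {cls (f ip), cls (f im)}"
    proof
      assume "N \<le> i"
      have "ip \<in> I \<and> N \<le> ip" unfolding ip_def by (rule someI[of _ i]) (use i(1) \<open>N \<le> i\<close> in simp)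
      then have "cls (f i) = cls (f ip)" using i(1) \<open>N \<le> i\<close> by (intro far_end) auto
      then show ?thesis using X by simp
    next
      assume "i \<le> - N"
      have "im \<in> I \<and> im \<le> - N" unfolding im_def by (rule someI[of _ i]) (use i(1) \<open>i \<le> - N\<close> in simp)
      then have "cls (f i) = cls (f im)" using i(1) \<open>i \<le> - N\<close> by (intro far_end) auto
      then show ?thesis using X by simp
    qed
  qed
  have "card {X \<in> components V E. infinite X} \<le> card {cls (f ip), cls (f im)}"
    by (rule card_mono[OF _ sub]) simp
  also have "\<dots> \<le> 2" by (simp add: card_insert_le_m1)
  finally show ?thesis using finite_subset[OF sub] by simp
qed

context cayley_graph
begin

lemma reach_adj_avoiding: "cay_adj g h \<Longrightarrow> g \<notin> B \<Longrightarrow> h \<notin> B \<Longrightarrow> Cay.reach (carrier G - B) g h"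
  using Cay.adj_in_V by (blast intro: Cay.reach_step)

text \<open>Every element \<open>s\<close> of the group is represented by a walk in the Cayley graph from \<open>\<one>\<close> to
  \<open>s\<close>, through a finite set \<open>Q\<close>; its translate by \<open>g\<close> joins \<open>g\<close> to \<open>g s\<close> through \<open>g Q\<close>.\<close>

lemma reach_translate_avoiding:
  assumes "s \<in> generate G S"
  shows "\<exists>Q. finite Q \<and> Q \<subseteq> carrier G \<and>
    (\<forall>g\<in>carrier G. \<forall>B. (\<forall>q\<in>Q. g \<otimes> q \<notin> B) \<longrightarrow> Cay.reach (carrier G - B) g (g \<otimes> s))"
  using assms
proof (induction rule: generate.induct)
  case one
  show ?case by (intro exI[of _ "{}"]) auto
next
  case (incl h)
  have "cay_adj g (g \<otimes> h)" if "g \<in> carrier G" for g unfolding cay_adj_def using that incl S_carrier by blast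
  then show ?case using incl S_carrier
    by (intro exI[of _ "{\<one>, h}"]) (auto intro: reach_adj_avoiding)
next
  case (inv h)
  have "cay_adj g (g \<otimes> inv h)" if "g \<in> carrier G" for g unfolding cay_adj_def using that inv S_carrier by blast
  then show ?case using inv S_carrier
    by (intro exI[of _ "{\<one>, inv h}"]) (auto intro: reach_adj_avoiding)
next
  case (eng h1 h2)
  obtain Q1 where Q1: "finite Q1" "Q1 \<subseteq> carrier G"
    "\<And>g B. g \<in> carrier G \<Longrightarrow> (\<forall>q\<in>Q1. g \<otimes> q \<notin> B) \<Longrightarrow> Cay.reach (carrier G - B) g (g \<otimes> h1)"
    using eng.IH(1) by blast
  obtain Q2 where Q2: "finite Q2" "Q2 \<subseteq> carrier G"
    "\<And>g B. g \<in> carrier G \<Longrightarrow> (\<forall>q\<in>Q2. g \<otimes> q \<notin> B) \<Longrightarrow> Cay.reach (carrier G - B) g (g \<otimes> h2)"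
    using eng.IH(2) by blast
  have h: "h1 \<in> carrier G" "h2 \<in> carrier G" using eng.hyps generate_S by auto
  show ?case
  proof (intro exI[of _ "Q1 \<union> (\<otimes>) h1 ` Q2"] conjI ballI allI impI)
    show "finite (Q1 \<union> (\<otimes>) h1 ` Q2)" "Q1 \<union> (\<otimes>) h1 ` Q2 \<subseteq> carrier G" using Q1 Q2 h by auto
    fix g B assume g: "g \<in> carrier G" and avoid: "\<forall>q\<in>Q1 \<union> (\<otimes>) h1 ` Q2. g \<otimes> q \<notin> B"
    have "Cay.reach (carrier G - B) g (g \<otimes> h1)" using Q1(3) g avoid by blast
    moreover have "\<forall>q\<in>Q2. (g \<otimes> h1) \<otimes> q \<notin> B" using avoid g h Q2(2) by (auto simp: m_assoc subset_iff)
    then have "Cay.reach (carrier G - B) (g \<otimes> h1) ((g \<otimes> h1) \<otimes> h2)" using Q2(3) g h by simp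
    ultimately show "Cay.reach (carrier G - B) g (g \<otimes> (h1 \<otimes> h2))"
      using Cay.reach_trans g h by (simp add: m_assoc)
  qed
qed

lemma reach_translate_avoiding_uniform:
  assumes "finite D" "D \<subseteq> generate G S"
  shows "\<exists>Q. finite Q \<and> Q \<subseteq> carrier G \<and>
    (\<forall>t\<in>D. \<forall>g\<in>carrier G. \<forall>B. (\<forall>q\<in>Q. g \<otimes> q \<notin> B) \<longrightarrow> Cay.reach (carrier G - B) g (g \<otimes> t))"
  using assms
proof (induction rule: finite_induct)
  case (insert t D)
  then obtain Q where Q: "finite Q" "Q \<subseteq> carrier G"
    "\<forall>t\<in>D. \<forall>g\<in>carrier G. \<forall>B. (\<forall>q\<in>Q. g \<otimes> q \<notin> B) \<longrightarrow> Cay.reach (carrier G - B) g (g \<otimes> t)"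
    by auto
  obtain Qt where Qt: "finite Qt" "Qt \<subseteq> carrier G"
    "\<forall>g\<in>carrier G. \<forall>B. (\<forall>q\<in>Qt. g \<otimes> q \<notin> B) \<longrightarrow> Cay.reach (carrier G - B) g (g \<otimes> t)"
    using reach_translate_avoiding[of t] insert.prems by blast
  show ?case using Q Qt by (intro exI[of _ "Q \<union> Qt"]) auto
qed auto

lemma ham_path_steps_avoid_finite_set:
  assumes S0: "fin_gen_set G S0" and f: "bij_betw f I (carrier G)"
    and edge: "\<And>i. i \<in> I \<Longrightarrow> i + 1 \<in> I \<Longrightarrow> {f i, f (i + 1)} \<in> cay_edges G S0"
    and B: "finite B"
  shows "\<exists>Bad. finite Bad \<and> (\<forall>i. i \<in> I \<longrightarrow> i + 1 \<in> I \<longrightarrow> i \<notin> Bad \<longrightarrow> i + 1 \<notin> Bad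
    \<longrightarrow> Cay.reach (carrier G - B) (f i) (f (i + 1)))"
proof -
  define D where "D = S0 \<union> (\<lambda>s. inv s) ` S0"
  have D: "finite D" "D \<subseteq> generate G S" using S0 generate_S unfolding D_def fin_gen_set_def by auto
  obtain Q where Q: "finite Q" "Q \<subseteq> carrier G" and
    paths: "\<forall>t\<in>D. \<forall>g\<in>carrier G. \<forall>B. (\<forall>q\<in>Q. g \<otimes> q \<notin> B) \<longrightarrow> Cay.reach (carrier G - B) g (g \<otimes> t)"
    using reach_translate_avoiding_uniform[OF D] by blast
  define Bad where "Bad = f -` ((\<lambda>(b, q). b \<otimes> inv q) ` (B \<times> Q)) \<inter> I"
  have "finite ((\<lambda>(b, q). b \<otimes> inv q) ` (B \<times> Q))" using B Q(1) by simp
  then have "finite Bad" unfolding Bad_def by (rule finite_vimage_IntI[OF _ bij_betw_imp_inj_on[OF f]])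
  have avoid: "\<forall>q\<in>Q. f i \<otimes> q \<notin> B" if i: "i \<in> I" "i \<notin> Bad" for i
  proof (intro ballI notI)
    fix q assume q: "q \<in> Q" "f i \<otimes> q \<in> B"
    have "f i \<in> carrier G" using bij_betwE[OF f] i(1) by blast
    moreover have "q \<in> carrier G" using q(1) Q(2) by blast
    ultimately have "f i = (f i \<otimes> q) \<otimes> inv q" by (simp add: m_assoc)
    then have "f i \<in> (\<lambda>(b, q). b \<otimes> inv q) ` (B \<times> Q)"
      using q by (intro image_eqI[of _ _ "(f i \<otimes> q, q)"]) auto
    then show False using i unfolding Bad_def by simp
  qed
  have "Cay.reach (carrier G - B) (f i) (f (i + 1))"
    if i: "i \<in> I" "i + 1 \<in> I" "i \<notin> Bad" "i + 1 \<notin> Bad" for i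
  proof -
    obtain g h s where ghs: "{f i, f (i + 1)} = {g, h}" "g \<in> carrier G" "s \<in> S0"
      "h = g \<otimes> s \<or> h = g \<otimes> inv s"
      using edge[OF i(1,2)] unfolding cay_edges_def by auto
    obtain t where t: "t \<in> D" "h = g \<otimes> t" using ghs(3,4) unfolding D_def by blast
    have ends: "f i = g \<and> f (i + 1) = h \<or> f i = h \<and> f (i + 1) = g"
      using ghs(1) unfolding doubleton_eq_iff by blast
    then have "\<forall>q\<in>Q. g \<otimes> q \<notin> B" using avoid[OF i(1,3)] avoid[OF i(2,4)] by (elim disjE) simp_all
    then have "Cay.reach (carrier G - B) g h" using paths t ghs(2) by simp
    then show ?thesis using ends Cay.reach_sym by (elim disjE) simp_all
  qed
  then show ?thesis using \<open>finite Bad\<close> by blast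
qed

lemma walk_avoiding_removed_edges:
  assumes "Cay.reach (carrier G - \<Union> (A \<inter> cay_edges G S)) x y"
  shows "(\<lambda>u v. {u, v} \<in> cay_edges G S - A)\<^sup>*\<^sup>* x y"
  using assms unfolding Cay.reach_def
proof (induction rule: rtranclp_induct)
  case (step y z)
  then have yz: "cay_adj y z" "y \<notin> \<Union> (A \<inter> cay_edges G S)" by auto
  then have "{y, z} \<in> cay_edges G S" by (simp add: cay_edges_iff)
  moreover have "{y, z} \<notin> A" using yz(2) calculation by blast
  ultimately show ?case using step.IH by (simp add: rtranclp.rtrancl_into_rtrancl)
qed simp

lemma finitely_many_ends_if_ham_path:
  assumes S0: "fin_gen_set G S0" and ham: "cayley_ham_path G S0"
  shows "graph_finitely_many_ends (carrier G) (cay_edges G S)"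
proof -
  obtain I f where I: "int_interval I" and f: "bij_betw f I (carrier G)"
    and edge: "\<And>i. i \<in> I \<Longrightarrow> i + 1 \<in> I \<Longrightarrow> {f i, f (i + 1)} \<in> cay_edges G S0"
    using ham unfolding cayley_ham_path_def by blast
  have "finite {X \<in> components (carrier G) (cay_edges G S - A). infinite X}
      \<and> card {X \<in> components (carrier G) (cay_edges G S - A). infinite X} \<le> 2" if "finite A" for A
  proof -
    have "finite (\<Union> (A \<inter> cay_edges G S))" using that by (auto simp: cay_edges_def)
    then obtain Bad where "finite Bad" and steps: "\<And>i. i \<in> I \<Longrightarrow> i + 1 \<in> I \<Longrightarrow> i \<notin> Bad \<Longrightarrow>
        i + 1 \<notin> Bad \<Longrightarrow> Cay.reach (carrier G - \<Union> (A \<inter> cay_edges G S)) (f i) (f (i + 1))"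
      using ham_path_steps_avoid_finite_set[OF S0 f edge] by blast
    show ?thesis
    proof (rule at_most_two_infinite_components_of_enumeration[OF I f \<open>finite Bad\<close>])
      show "v \<in> carrier G" if "{u, v} \<in> cay_edges G S - A" for u v
        using that Cay.adj_in_V[of u v] by (simp add: cay_edges_iff)
    qed (use steps walk_avoiding_removed_edges in blast)
  qed
  then show ?thesis unfolding graph_finitely_many_ends_def Let_def by (intro exI[of _ 2]) blast
qed

end

lemma cayley_graph_if_fin_gen_set: "group G \<Longrightarrow> fin_gen_set G S \<Longrightarrow> cayley_graph G S"
  unfolding cayley_graph_def cayley_graph_axioms_def fin_gen_set_def by blast

theorem corollary4p6:
  fixes G :: "('a, 'b) monoid_scheme"
  assumes "group G" and "finitely_generated G"
  shows "group_finitely_many_ends G \<longleftrightarrow> (\<exists>S. fin_gen_set G S \<and> cayley_ham_path G S)"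
proof
  assume ends: "group_finitely_many_ends G"
  show "\<exists>S. fin_gen_set G S \<and> cayley_ham_path G S"
  proof (cases "finite (carrier G)")
    case True
    then show ?thesis using group.finite_group_ham_path[OF assms(1)] by blast
  next
    case False
    obtain S where S: "fin_gen_set G S" using assms(2) unfolding finitely_generated_def by blast
    interpret cayley_graph G S using cayley_graph_if_fin_gen_set[OF assms(1) S] .
    obtain n where "\<And>F. finite F \<Longrightarrow> finite (Cay.infinite_components F) \<and> card (Cay.infinite_components F) \<le> n"
      using infinite_components_bounded ends S unfolding group_finitely_many_ends_def by blast
    then show ?thesis using cayley_ham_path_if_bounded_ends False fin_gen_set_cube_gens by blast
  qed
next
  assume "\<exists>S. fin_gen_set G S \<and> cayley_ham_path G S"
  then obtain S0 where "fin_gen_set G S0" "cayley_ham_path G S0" by blast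
  show "group_finitely_many_ends G" unfolding group_finitely_many_ends_def
  proof (intro allI impI)
    fix S assume "fin_gen_set G S"
    then interpret cayley_graph G S by (rule cayley_graph_if_fin_gen_set[OF assms(1)])
    show "graph_finitely_many_ends (carrier G) (cay_edges G S)"
      by (rule finitely_many_ends_if_ham_path) fact+
  qed
qed

end
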